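(* Let $G$ be a group which is the central product of normal subgroups $H$ and $K$ (so $G=HK$, $[H,K]=1$), and let $D$ be a divisible abelian group with trivial $G$-action. For any subgroup $B$ of $G$ contained in $H'\cap K'$ (such $B$ is central), the inflation homomorphism $\inf:\operatorname{H}^2(G/B,D)\to \operatorname{H}^2(G,D)$ is surjective.
   Context: $X'$ denotes the commutator subgroup of $X$; $\operatorname{H}^2(X,D)$ is second cohomology with trivial coefficients. *)

theory Defs
  imports "HOL-Algebra.Algebra" "HOL-Library.FuncSet"
begin

text \<open>Second cohomology with trivial coefficients in an abelian group D
  (written multiplicatively, as in HOL-Algebra), via inhomogeneous cochains.\<close>

definition two_cocycles :: "('a,'b) monoid_scheme \<Rightarrow> ('d,'e) monoid_scheme \<Rightarrow> ('a \<times> 'a \<Rightarrow> 'd) set" where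
  "two_cocycles G D = {f. f \<in> (carrier G \<times> carrier G) \<rightarrow>\<^sub>E carrier D \<and>
     (\<forall>x\<in>carrier G. \<forall>y\<in>carrier G. \<forall>z\<in>carrier G.
        f (x, y) \<otimes>\<^bsub>D\<^esub> f (x \<otimes>\<^bsub>G\<^esub> y, z) = f (y, z) \<otimes>\<^bsub>D\<^esub> f (x, y \<otimes>\<^bsub>G\<^esub> z))}"

definition cohomologous :: "('a,'b) monoid_scheme \<Rightarrow> ('d,'e) monoid_scheme \<Rightarrow> ('a \<times> 'a \<Rightarrow> 'd) rel" where
  "cohomologous G D = {(f, f'). f \<in> two_cocycles G D \<and> f' \<in> two_cocycles G D \<and>
     (\<exists>g \<in> carrier G \<rightarrow> carrier D. \<forall>x\<in>carrier G. \<forall>y\<in>carrier G.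
        f (x, y) = f' (x, y) \<otimes>\<^bsub>D\<^esub> (g x \<otimes>\<^bsub>D\<^esub> g y \<otimes>\<^bsub>D\<^esub> inv\<^bsub>D\<^esub> (g (x \<otimes>\<^bsub>G\<^esub> y))))}"

definition H2 :: "('a,'b) monoid_scheme \<Rightarrow> ('d,'e) monoid_scheme \<Rightarrow> ('a \<times> 'a \<Rightarrow> 'd) set set" where
  "H2 G D = two_cocycles G D // cohomologous G D"

definition inflate_cocycle :: "('a,'b) monoid_scheme \<Rightarrow> 'a set \<Rightarrow> ('a set \<times> 'a set \<Rightarrow> 'd) \<Rightarrow> ('a \<times> 'a \<Rightarrow> 'd)" where
  "inflate_cocycle G B f = (\<lambda>(x, y) \<in> carrier G \<times> carrier G. f (B #>\<^bsub>G\<^esub> x, B #>\<^bsub>G\<^esub> y))"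

definition inflation :: "('a,'b) monoid_scheme \<Rightarrow> 'a set \<Rightarrow> ('d,'e) monoid_scheme \<Rightarrow> ('a set \<times> 'a set \<Rightarrow> 'd) set \<Rightarrow> ('a \<times> 'a \<Rightarrow> 'd) set" where
  "inflation G B D C = cohomologous G D `` {inflate_cocycle G B (SOME f. f \<in> C)}"

definition divisible_group :: "('d,'e) monoid_scheme \<Rightarrow> bool" where
  "divisible_group D \<longleftrightarrow> (\<forall>d\<in>carrier D. \<forall>n::nat. n > 0 \<longrightarrow> (\<exists>x\<in>carrier D. x [^]\<^bsub>D\<^esub> n = d))"

end

theory Submission
  imports Defs
begin

text \<open>For fixed \<open>y\<close>, a 2-cocycle \<open>f\<close> gives a homomorphism \<open>x \<mapsto> f(x,y) f(y,x)\<inverse>\<close> from the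
  centraliser of \<open>y\<close> to the abelian group \<open>D\<close>; it vanishes on commutators.  In the central
  product \<open>G = HK\<close> every \<open>b \<in> H' \<inter> K'\<close> is central, and writing \<open>x = hk\<close> this shows
  \<open>f(x,b) = f(b,x)\<close>.  On the abelian group \<open>B\<close> the cocycle \<open>f\<close> is therefore symmetric, hence
  a coboundary \<open>\<delta>\<rho>\<close> because \<open>D\<close> is divisible, i.e. injective (Zorn's lemma).  Twisting \<open>f\<close>
  by a coboundary built from \<open>\<rho>\<close> and a transversal of \<open>B\<close> makes it constant on \<open>B \<times> G\<close> and
  \<open>G \<times> B\<close>; such a cocycle is invariant under \<open>B\<close> in both arguments and so is inflated from
  \<open>G/B\<close>.\<close>

section \<open>Extending homomorphisms into divisible groups\<close>

lemma (in normal) int_pow_mem_iff_dvd_ord: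
  assumes "x \<in> carrier G"
  shows "x [^] k \<in> H \<longleftrightarrow> int (group.ord (G Mod H) (H #> x)) dvd k"
proof -
  have Q: "group (G Mod H)" by (rule factorgroup_is_group)
  have "H #> x [^] k = H \<longleftrightarrow> x [^] k \<in> H"
    using coset_join1[OF _ int_pow_closed[OF assms] subgroup_axioms] rcos_const[OF is_group] by blast
  moreover have "H #> x \<in> carrier (G Mod H)" using assms by (simp add: carrier_FactGroup)
  ultimately show ?thesis
    using group.int_pow_eq_id[OF Q, of "H #> x" k] FactGroup_int_pow[OF assms] by simp
qed

lemma hom_fst_DirProd: "fst \<in> hom (G \<times>\<times> H) G"
  by (auto simp: hom_def mult_DirProd')

lemma hom_snd_DirProd: "snd \<in> hom (G \<times>\<times> H) H"
  by (auto simp: hom_def mult_DirProd')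

lemma DirProd_int_pow:
  assumes "group G" "group H" "x \<in> carrier G" "y \<in> carrier H"
  shows "(x, y) [^]\<^bsub>G \<times>\<times> H\<^esub> (k::int) = (x [^]\<^bsub>G\<^esub> k, y [^]\<^bsub>H\<^esub> k)"
proof -
  have "group (G \<times>\<times> H)" using assms by (simp add: DirProd_group)
  then show ?thesis
    using hom_int_pow[OF hom_fst_DirProd, where x="(x, y)" and n=k] hom_int_pow[OF hom_snd_DirProd, where x="(x, y)" and n=k] assms
    by (metis carrier_DirProd mem_Sigma_iff prod.collapse fst_conv snd_conv)
qed

lemma DirProd_comm_group:
  assumes "comm_group G" "comm_group H"
  shows "comm_group (G \<times>\<times> H)"
proof -
  interpret G: comm_group G by fact
  interpret H: comm_group H by fact
  show ?thesis
    by (rule group.group_comm_groupI[OF DirProd_group[OF G.is_group H.is_group]])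
       (auto simp: G.m_comm H.m_comm)
qed

lemma generate_DirProd_singleton:
  assumes "group G" "group H" "x \<in> carrier G" "y \<in> carrier H"
  shows "generate (G \<times>\<times> H) {(x, y)} = {(x [^]\<^bsub>G\<^esub> k, y [^]\<^bsub>H\<^esub> k) | k::int. True}"
proof -
  interpret P: group "G \<times>\<times> H" using DirProd_group[OF assms(1,2)] .
  have "generate (G \<times>\<times> H) {(x, y)} = {(x, y) [^]\<^bsub>G \<times>\<times> H\<^esub> (k::int) | k. k \<in> UNIV}"
    by (rule P.generate_pow) (use assms(3,4) in simp)
  also have "\<dots> = {(x [^]\<^bsub>G\<^esub> k, y [^]\<^bsub>H\<^esub> k) | k::int. True}"
    by (simp only: DirProd_int_pow[OF assms] UNIV_I)
  finally show ?thesis .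
qed

lemma Union_chain_pair:
  assumes "\<And>H K. H \<in> C \<Longrightarrow> K \<in> C \<Longrightarrow> H \<subseteq> K \<or> K \<subseteq> H" and "x \<in> \<Union>C" "y \<in> \<Union>C"
  shows "\<exists>H\<in>C. x \<in> H \<and> y \<in> H"
  using assms by blast

lemma subgroup_Union_chain:
  assumes "\<And>H. H \<in> C \<Longrightarrow> subgroup H G" and "\<And>H K. H \<in> C \<Longrightarrow> K \<in> C \<Longrightarrow> H \<subseteq> K \<or> K \<subseteq> H"
    and "C \<noteq> {}"
  shows "subgroup (\<Union>C) G"
proof
  fix x y assume xy: "x \<in> \<Union>C" "y \<in> \<Union>C"
  have "\<exists>H\<in>C. x \<in> H \<and> y \<in> H" by (rule Union_chain_pair[OF assms(2) xy])
  then obtain H where H: "H \<in> C" "x \<in> H" "y \<in> H" by auto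
  have "x \<otimes>\<^bsub>G\<^esub> y \<in> H" by (rule subgroup.m_closed[OF assms(1)[OF H(1)] H(2,3)])
  then show "x \<otimes>\<^bsub>G\<^esub> y \<in> \<Union>C" using H(1) by blast
next
  show "\<Union>C \<subseteq> carrier G" by (rule Union_least) (rule subgroup.subset[OF assms(1)])
next
  from assms(3) obtain H where H: "H \<in> C" by auto
  have "\<one>\<^bsub>G\<^esub> \<in> H" by (rule subgroup.one_closed[OF assms(1)[OF H]])
  then show "\<one>\<^bsub>G\<^esub> \<in> \<Union>C" using H by blast
next
  fix x assume "x \<in> \<Union>C"
  then obtain H where H: "H \<in> C" "x \<in> H" by auto
  have "inv\<^bsub>G\<^esub> x \<in> H" by (rule subgroup.m_inv_closed[OF assms(1)[OF H(1)] H(2)])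
  then show "inv\<^bsub>G\<^esub> x \<in> \<Union>C" using H by blast
qed

lemma single_valued_Union_chain:
  assumes "\<And>r. r \<in> C \<Longrightarrow> single_valued r" and "\<And>r s. r \<in> C \<Longrightarrow> s \<in> C \<Longrightarrow> r \<subseteq> s \<or> s \<subseteq> r"
  shows "single_valued (\<Union>C)"
proof (rule single_valuedI)
  fix x y z assume xy: "(x, y) \<in> \<Union>C" and xz: "(x, z) \<in> \<Union>C"
  have "\<exists>r\<in>C. (x, y) \<in> r \<and> (x, z) \<in> r" using Union_chain_pair[OF assms(2) xy xz] .
  then obtain r where "r \<in> C" "(x, y) \<in> r" "(x, z) \<in> r" by auto
  then show "y = z" using assms(1) single_valuedD by metis
qed

lemma single_valued_subgroup_iff:
  assumes "group E" "group D" "subgroup \<Gamma> (E \<times>\<times> D)"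
  shows "single_valued \<Gamma> \<longleftrightarrow> (\<forall>v. (\<one>\<^bsub>E\<^esub>, v) \<in> \<Gamma> \<longrightarrow> v = \<one>\<^bsub>D\<^esub>)"
proof
  assume "single_valued \<Gamma>"
  then show "\<forall>v. (\<one>\<^bsub>E\<^esub>, v) \<in> \<Gamma> \<longrightarrow> v = \<one>\<^bsub>D\<^esub>"
    using subgroup.one_closed[OF assms(3)] by (auto dest: single_valuedD)
next
  interpret E: group E by fact
  interpret D: group D by fact
  assume trivial: "\<forall>v. (\<one>\<^bsub>E\<^esub>, v) \<in> \<Gamma> \<longrightarrow> v = \<one>\<^bsub>D\<^esub>"
  show "single_valued \<Gamma>"
  proof (rule single_valuedI)
    fix x u v assume xu: "(x, u) \<in> \<Gamma>" and xv: "(x, v) \<in> \<Gamma>"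
    have c: "x \<in> carrier E" "u \<in> carrier D" "v \<in> carrier D"
      using xu xv subgroup.subset[OF assms(3)] by auto
    have "inv\<^bsub>E \<times>\<times> D\<^esub> (x, u) \<otimes>\<^bsub>E \<times>\<times> D\<^esub> (x, v) \<in> \<Gamma>"
      by (rule subgroup.m_closed[OF assms(3) subgroup.m_inv_closed[OF assms(3) xu] xv])
    then have "(\<one>\<^bsub>E\<^esub>, inv\<^bsub>D\<^esub> u \<otimes>\<^bsub>D\<^esub> v) \<in> \<Gamma>" using c assms(1,2) by simp
    then have "inv\<^bsub>D\<^esub> u \<otimes>\<^bsub>D\<^esub> v = \<one>\<^bsub>D\<^esub>" using trivial by blast
    then have "u \<otimes>\<^bsub>D\<^esub> (inv\<^bsub>D\<^esub> u \<otimes>\<^bsub>D\<^esub> v) = u" using c by simp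
    then show "u = v" using c by (simp add: D.m_assoc[symmetric])
  qed
qed

definition hom_graph :: "('e, 'x) monoid_scheme \<Rightarrow> ('d, 'y) monoid_scheme \<Rightarrow> ('e \<times> 'd) set \<Rightarrow> bool" where
  "hom_graph E D \<Gamma> \<longleftrightarrow> subgroup \<Gamma> (E \<times>\<times> D) \<and> single_valued \<Gamma>"

lemma hom_graph_adjoin:
  assumes E: "comm_group E" and D: "comm_group D" and \<Gamma>: "hom_graph E D \<Gamma>"
    and x: "x \<in> carrier E" and y: "y \<in> carrier D"
    and compatible: "\<And>k u. (x [^]\<^bsub>E\<^esub> (k::int), u) \<in> \<Gamma> \<Longrightarrow> u = y [^]\<^bsub>D\<^esub> k"
  shows "hom_graph E D (\<Gamma> <#>\<^bsub>E \<times>\<times> D\<^esub> generate (E \<times>\<times> D) {(x, y)})"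
proof -
  interpret E: comm_group E by fact
  interpret D: comm_group D by fact
  interpret P: comm_group "E \<times>\<times> D" using DirProd_comm_group[OF E D] .
  have sub: "subgroup \<Gamma> (E \<times>\<times> D)" using \<Gamma> unfolding hom_graph_def by blast
  note gen = generate_DirProd_singleton[OF E.is_group D.is_group x y]
  let ?\<Gamma>' = "\<Gamma> <#>\<^bsub>E \<times>\<times> D\<^esub> generate (E \<times>\<times> D) {(x, y)}"
  have "{(x, y)} \<subseteq> carrier (E \<times>\<times> D)" using x y by simp
  then have sub': "subgroup ?\<Gamma>' (E \<times>\<times> D)"
    by (rule P.mult_subgroups[OF sub P.generate_is_subgroup])
  moreover have "v = \<one>\<^bsub>D\<^esub>" if mem: "(\<one>\<^bsub>E\<^esub>, v) \<in> ?\<Gamma>'" for v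
  proof -
    obtain \<gamma> g where \<gamma>: "\<gamma> \<in> \<Gamma>" and "g \<in> generate (E \<times>\<times> D) {(x, y)}"
      and v: "(\<one>\<^bsub>E\<^esub>, v) = \<gamma> \<otimes>\<^bsub>E \<times>\<times> D\<^esub> g"
      using mem unfolding set_mult_def by blast
    obtain s u where su': "\<gamma> = (s, u)" by (cases \<gamma>)
    obtain k where g: "g = (x [^]\<^bsub>E\<^esub> (k::int), y [^]\<^bsub>D\<^esub> k)"
      using \<open>g \<in> generate (E \<times>\<times> D) {(x, y)}\<close> unfolding gen by blast
    have su: "(s, u) \<in> \<Gamma>" using \<gamma> unfolding su' .
    have "(\<one>\<^bsub>E\<^esub>, v) = (s \<otimes>\<^bsub>E\<^esub> x [^]\<^bsub>E\<^esub> k, u \<otimes>\<^bsub>D\<^esub> y [^]\<^bsub>D\<^esub> k)"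
      using v unfolding su' g mult_DirProd .
    then have eq: "s \<otimes>\<^bsub>E\<^esub> x [^]\<^bsub>E\<^esub> k = \<one>\<^bsub>E\<^esub>" "v = u \<otimes>\<^bsub>D\<^esub> y [^]\<^bsub>D\<^esub> k"
      by (metis Pair_inject)+
    have c: "s \<in> carrier E" "u \<in> carrier D" using su subgroup.subset[OF sub] by auto
    have "x [^]\<^bsub>E\<^esub> k \<otimes>\<^bsub>E\<^esub> s = \<one>\<^bsub>E\<^esub>" using eq(1) c x by (simp add: E.m_comm)
    then have "inv\<^bsub>E\<^esub> s = x [^]\<^bsub>E\<^esub> k" by (rule E.inv_equality[OF _ c(1) E.int_pow_closed[OF x]])
    moreover have "inv\<^bsub>E \<times>\<times> D\<^esub> (s, u) \<in> \<Gamma>" using subgroup.m_inv_closed[OF sub su] .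
    ultimately have "(x [^]\<^bsub>E\<^esub> k, inv\<^bsub>D\<^esub> u) \<in> \<Gamma>" using inv_DirProd[OF E.is_group D.is_group c] by simp
    then have "y [^]\<^bsub>D\<^esub> k = inv\<^bsub>D\<^esub> u" by (rule compatible[symmetric])
    then show ?thesis using eq(2) c by simp
  qed
  ultimately show ?thesis
    unfolding hom_graph_def single_valued_subgroup_iff[OF E.is_group D.is_group sub'] by blast
qed

lemma hom_graph_compatible_root:
  assumes E: "comm_group E" and D: "comm_group D" "divisible_group D" and \<Gamma>: "hom_graph E D \<Gamma>"
    and x: "x \<in> carrier E"
  obtains y where "y \<in> carrier D" "\<And>k u. (x [^]\<^bsub>E\<^esub> (k::int), u) \<in> \<Gamma> \<Longrightarrow> u = y [^]\<^bsub>D\<^esub> k"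
proof -
  interpret E: comm_group E by fact
  interpret D: comm_group D by fact
  have sub: "subgroup \<Gamma> (E \<times>\<times> D)" and sv: "single_valued \<Gamma>" using \<Gamma> unfolding hom_graph_def by auto
  have "group_hom (E \<times>\<times> D) E fst"
    by (rule group_hom.intro[OF DirProd_group[OF E.is_group D.is_group] E.is_group])
       (rule group_hom_axioms.intro[OF hom_fst_DirProd])
  then have "subgroup (fst ` \<Gamma>) E" by (rule group_hom.subgroup_img_is_subgroup[OF _ sub])
  then have "fst ` \<Gamma> \<lhd> E" by (rule E.subgroup_imp_normal)
  then obtain n :: nat where n: "\<And>k::int. x [^]\<^bsub>E\<^esub> k \<in> fst ` \<Gamma> \<longleftrightarrow> int n dvd k"
    using normal.int_pow_mem_iff_dvd_ord[OF _ x] by blast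
  have "x [^]\<^bsub>E\<^esub> int n \<in> fst ` \<Gamma>" using n by simp
  then obtain u\<^sub>n where un: "(x [^]\<^bsub>E\<^esub> int n, u\<^sub>n) \<in> \<Gamma>" by auto
  then have unc: "u\<^sub>n \<in> carrier D" using subgroup.subset[OF sub] by auto
  obtain y where y: "y \<in> carrier D" "y [^]\<^bsub>D\<^esub> n = u\<^sub>n"
  proof (cases "n = 0")
    case True
    then show ?thesis
      using that[of "\<one>\<^bsub>D\<^esub>"] un single_valued_subgroup_iff[OF E.is_group D.is_group sub] sv by simp
  next
    case False
    then have "\<exists>y\<in>carrier D. y [^]\<^bsub>D\<^esub> n = u\<^sub>n"
      using D(2) unc unfolding divisible_group_def by simp
    then show ?thesis using that by blast
  qed
  have "u = y [^]\<^bsub>D\<^esub> k" if xu: "(x [^]\<^bsub>E\<^esub> (k::int), u) \<in> \<Gamma>" for k u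
  proof -
    have "x [^]\<^bsub>E\<^esub> k \<in> fst ` \<Gamma>" using xu by (metis fst_conv image_eqI)
    then obtain m where k: "k = int n * m" using n by (auto elim: dvdE)
    have "(x [^]\<^bsub>E\<^esub> int n, u\<^sub>n) [^]\<^bsub>E \<times>\<times> D\<^esub> m \<in> \<Gamma>"
      using group.subgroup_int_pow_closed[OF DirProd_group[OF E.is_group D.is_group] sub un] .
    also have "(x [^]\<^bsub>E\<^esub> int n, u\<^sub>n) [^]\<^bsub>E \<times>\<times> D\<^esub> m = ((x [^]\<^bsub>E\<^esub> int n) [^]\<^bsub>E\<^esub> m, (y [^]\<^bsub>D\<^esub> int n) [^]\<^bsub>D\<^esub> m)"
      using DirProd_int_pow[OF E.is_group D.is_group _ unc] x by (simp add: int_pow_int y(2))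
    also have "\<dots> = (x [^]\<^bsub>E\<^esub> k, y [^]\<^bsub>D\<^esub> k)"
      using x y(1) by (simp add: k E.int_pow_pow D.int_pow_pow)
    finally have "(x [^]\<^bsub>E\<^esub> k, y [^]\<^bsub>D\<^esub> k) \<in> \<Gamma>" .
    then show ?thesis using xu sv by (auto dest: single_valuedD)
  qed
  then show ?thesis using that y by blast
qed

lemma hom_graph_of_hom:
  assumes E: "group E" and D: "group D" and A: "subgroup A E" and \<phi>: "\<phi> \<in> hom (E\<lparr>carrier := A\<rparr>) D"
  shows "hom_graph E D ((\<lambda>a. (a, \<phi> a)) ` A)"
proof -
  have "group_hom (E\<lparr>carrier := A\<rparr>) (E \<times>\<times> D) (\<lambda>a. (a, \<phi> a))"
  proof (rule group_hom.intro[OF subgroup.subgroup_is_group[OF A E] DirProd_group[OF E D]])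
    show "group_hom_axioms (E\<lparr>carrier := A\<rparr>) (E \<times>\<times> D) (\<lambda>a. (a, \<phi> a))"
      using \<phi> subgroup.subset[OF A] by (auto intro!: group_hom_axioms.intro simp: hom_def)
  qed
  then have "subgroup ((\<lambda>a. (a, \<phi> a)) ` A) (E \<times>\<times> D)"
    using group_hom.img_is_subgroup by fastforce
  then show ?thesis unfolding hom_graph_def by (auto intro: single_valuedI)
qed

lemma hom_graph_Zorn:
  assumes \<Gamma>\<^sub>0: "hom_graph E D \<Gamma>\<^sub>0"
  obtains M where "hom_graph E D M" "\<Gamma>\<^sub>0 \<subseteq> M" "\<And>\<Gamma>. hom_graph E D \<Gamma> \<Longrightarrow> M \<subseteq> \<Gamma> \<Longrightarrow> \<Gamma> = M"
proof -
  define \<G> where "\<G> = {\<Gamma>. hom_graph E D \<Gamma> \<and> \<Gamma>\<^sub>0 \<subseteq> \<Gamma>}"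
  have "\<exists>M\<in>\<G>. \<forall>\<Gamma>\<in>\<G>. M \<subseteq> \<Gamma> \<longrightarrow> \<Gamma> = M"
  proof (rule subset_Zorn)
    fix C assume "subset.chain \<G> C"
    then have C: "\<And>\<Gamma>. \<Gamma> \<in> C \<Longrightarrow> hom_graph E D \<Gamma> \<and> \<Gamma>\<^sub>0 \<subseteq> \<Gamma>"
      and chain: "\<And>\<Gamma> \<Delta>. \<Gamma> \<in> C \<Longrightarrow> \<Delta> \<in> C \<Longrightarrow> \<Gamma> \<subseteq> \<Delta> \<or> \<Delta> \<subseteq> \<Gamma>"
      unfolding subset_chain_def \<G>_def by auto
    show "\<exists>U\<in>\<G>. \<forall>\<Gamma>\<in>C. \<Gamma> \<subseteq> U"
    proof (cases "C = {}")
      case True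
      then show ?thesis using \<Gamma>\<^sub>0 unfolding \<G>_def by blast
    next
      case False
      have "subgroup (\<Union>C) (E \<times>\<times> D)"
        by (rule subgroup_Union_chain[OF _ chain False]) (use C in \<open>simp add: hom_graph_def\<close>)
      moreover have "single_valued (\<Union>C)"
        by (rule single_valued_Union_chain[OF _ chain]) (use C in \<open>simp add: hom_graph_def\<close>)
      moreover have "\<Gamma>\<^sub>0 \<subseteq> \<Union>C" using C False by blast
      ultimately show ?thesis unfolding \<G>_def hom_graph_def by blast
    qed
  qed
  then show thesis using that unfolding \<G>_def by (metis (mono_tags, lifting) mem_Collect_eq order_trans)
qed

lemma maximal_hom_graph_total:
  assumes E: "comm_group E" and D: "comm_group D" "divisible_group D" and M: "hom_graph E D M"
    and maximal: "\<And>\<Gamma>. hom_graph E D \<Gamma> \<Longrightarrow> M \<subseteq> \<Gamma> \<Longrightarrow> \<Gamma> = M"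
    and z: "z \<in> carrier E"
  shows "z \<in> Domain M"
proof -
  interpret E: comm_group E by fact
  interpret D: comm_group D by (rule D(1))
  have sub: "subgroup M (E \<times>\<times> D)" using M unfolding hom_graph_def by auto
  obtain y where y: "y \<in> carrier D" and compatible: "\<And>k u. (z [^]\<^bsub>E\<^esub> (k::int), u) \<in> M \<Longrightarrow> u = y [^]\<^bsub>D\<^esub> k"
    using hom_graph_compatible_root[OF E D M z] by blast
  define M' where "M' = M <#>\<^bsub>E \<times>\<times> D\<^esub> generate (E \<times>\<times> D) {(z, y)}"
  have M': "hom_graph E D M'" unfolding M'_def by (rule hom_graph_adjoin[OF E D(1) M z y compatible])
  have one: "\<one>\<^bsub>E \<times>\<times> D\<^esub> \<in> generate (E \<times>\<times> D) {(z, y)}" by (rule generate.one)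
  have gen: "(z, y) \<in> generate (E \<times>\<times> D) {(z, y)}" by (rule generate.incl) simp
  have "M \<subseteq> M'"
  proof
    fix p assume p: "p \<in> M"
    then have "p = p \<otimes>\<^bsub>E \<times>\<times> D\<^esub> \<one>\<^bsub>E \<times>\<times> D\<^esub>"
      using subgroup.subset[OF sub] by (cases p) auto
    then show "p \<in> M'" unfolding M'_def set_mult_def using p one by blast
  qed
  then have "M' = M" by (rule maximal[OF M'])
  moreover have "(z, y) = \<one>\<^bsub>E \<times>\<times> D\<^esub> \<otimes>\<^bsub>E \<times>\<times> D\<^esub> (z, y)" using z y by simp
  then have "(z, y) \<in> M'"
    unfolding M'_def set_mult_def using subgroup.one_closed[OF sub] gen by blast
  ultimately show ?thesis by (metis DomainI)
qed

lemma the_single_valued: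
  assumes "single_valued r" "(x, y) \<in> r"
  shows "(THE y. (x, y) \<in> r) = y"
  using assms by (auto dest: single_valuedD)

lemma total_hom_graph_hom:
  assumes M: "hom_graph E D M" and total: "\<And>z. z \<in> carrier E \<Longrightarrow> z \<in> Domain M"
  obtains \<psi> where "\<psi> \<in> hom E D" "\<And>z u. (z, u) \<in> M \<Longrightarrow> \<psi> z = u"
proof -
  have sub: "subgroup M (E \<times>\<times> D)" and sv: "single_valued M" using M unfolding hom_graph_def by auto
  define \<psi> where "\<psi> z = (THE u. (z, u) \<in> M)" for z
  have \<psi>_eq: "\<psi> z = u" if "(z, u) \<in> M" for z u
    unfolding \<psi>_def by (rule the_single_valued[OF sv that])
  have graph: "(z, \<psi> z) \<in> M" if "z \<in> carrier E" for z
    using total[OF that] \<psi>_eq by (metis DomainE)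
  have "\<psi> \<in> hom E D"
  proof (rule homI)
    fix z assume "z \<in> carrier E"
    then show "\<psi> z \<in> carrier D" using graph subgroup.subset[OF sub] by auto
  next
    fix z w assume "z \<in> carrier E" "w \<in> carrier E"
    then have "(z, \<psi> z) \<otimes>\<^bsub>E \<times>\<times> D\<^esub> (w, \<psi> w) \<in> M"
      by (intro subgroup.m_closed[OF sub] graph)
    then show "\<psi> (z \<otimes>\<^bsub>E\<^esub> w) = \<psi> z \<otimes>\<^bsub>D\<^esub> \<psi> w" by (simp add: \<psi>_eq)
  qed
  then show thesis using that \<psi>_eq by blast
qed

lemma divisible_group_hom_extend:
  assumes E: "comm_group E" and D: "comm_group D" "divisible_group D"
    and A: "subgroup A E" and \<phi>: "\<phi> \<in> hom (E\<lparr>carrier := A\<rparr>) D"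
  obtains \<psi> where "\<psi> \<in> hom E D" "\<And>a. a \<in> A \<Longrightarrow> \<psi> a = \<phi> a"
proof -
  interpret E: comm_group E by fact
  interpret D: comm_group D by (rule D(1))
  have "hom_graph E D ((\<lambda>a. (a, \<phi> a)) ` A)"
    by (rule hom_graph_of_hom[OF E.is_group D.is_group A \<phi>])
  then obtain M where M: "hom_graph E D M" "(\<lambda>a. (a, \<phi> a)) ` A \<subseteq> M"
    and maximal: "\<And>\<Gamma>. hom_graph E D \<Gamma> \<Longrightarrow> M \<subseteq> \<Gamma> \<Longrightarrow> \<Gamma> = M"
    using hom_graph_Zorn by blast
  obtain \<psi> where hom: "\<psi> \<in> hom E D" and \<psi>: "\<And>z u. (z, u) \<in> M \<Longrightarrow> \<psi> z = u"
    using total_hom_graph_hom[OF M(1) maximal_hom_graph_total[OF E D M(1) maximal]] by blast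
  have "\<psi> a = \<phi> a" if "a \<in> A" for a using that M(2) \<psi> by blast
  with hom show thesis by (rule that)
qed

lemma two_cocycles_closed:
  "f \<in> two_cocycles G D \<Longrightarrow> x \<in> carrier G \<Longrightarrow> y \<in> carrier G \<Longrightarrow> f (x, y) \<in> carrier D"
  unfolding two_cocycles_def by auto

lemma two_cocycles_eq:
  "f \<in> two_cocycles G D \<Longrightarrow> x \<in> carrier G \<Longrightarrow> y \<in> carrier G \<Longrightarrow> z \<in> carrier G \<Longrightarrow>
    f (x, y) \<otimes>\<^bsub>D\<^esub> f (x \<otimes>\<^bsub>G\<^esub> y, z) = f (y, z) \<otimes>\<^bsub>D\<^esub> f (x, y \<otimes>\<^bsub>G\<^esub> z)"
  unfolding two_cocycles_def by blast

lemma two_cocyclesI: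
  assumes "f \<in> (carrier G \<times> carrier G) \<rightarrow>\<^sub>E carrier D"
    and "\<And>x y z. x \<in> carrier G \<Longrightarrow> y \<in> carrier G \<Longrightarrow> z \<in> carrier G \<Longrightarrow>
      f (x, y) \<otimes>\<^bsub>D\<^esub> f (x \<otimes>\<^bsub>G\<^esub> y, z) = f (y, z) \<otimes>\<^bsub>D\<^esub> f (x, y \<otimes>\<^bsub>G\<^esub> z)"
  shows "f \<in> two_cocycles G D"
  unfolding two_cocycles_def using assms by blast

definition mult_coboundary ::
    "('a, 'b) monoid_scheme \<Rightarrow> ('d, 'e) monoid_scheme \<Rightarrow> ('a \<times> 'a \<Rightarrow> 'd) \<Rightarrow> ('a \<Rightarrow> 'd) \<Rightarrow> 'a \<times> 'a \<Rightarrow> 'd" where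
  "mult_coboundary G D f g = (\<lambda>(x, y) \<in> carrier G \<times> carrier G.
     f (x, y) \<otimes>\<^bsub>D\<^esub> (g x \<otimes>\<^bsub>D\<^esub> g y \<otimes>\<^bsub>D\<^esub> inv\<^bsub>D\<^esub> (g (x \<otimes>\<^bsub>G\<^esub> y))))"

lemma mult_coboundary_apply:
  "x \<in> carrier G \<Longrightarrow> y \<in> carrier G \<Longrightarrow>
    mult_coboundary G D f g (x, y) = f (x, y) \<otimes>\<^bsub>D\<^esub> (g x \<otimes>\<^bsub>D\<^esub> g y \<otimes>\<^bsub>D\<^esub> inv\<^bsub>D\<^esub> (g (x \<otimes>\<^bsub>G\<^esub> y)))"
  unfolding mult_coboundary_def by simp

lemma mult_coboundary_cong:
  assumes "monoid G" "\<And>x. x \<in> carrier G \<Longrightarrow> g x = h x"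
  shows "mult_coboundary G D f g = mult_coboundary G D f h"
  unfolding mult_coboundary_def using assms monoid.m_closed[OF assms(1)] by (auto intro!: restrict_ext)

context
  fixes G :: "('a, 'b) monoid_scheme" and D :: "('d, 'e) monoid_scheme"
    and f :: "'a \<times> 'a \<Rightarrow> 'd" and g :: "'a \<Rightarrow> 'd"
  assumes G: "monoid G" and D: "comm_group D"
    and f: "f \<in> two_cocycles G D" and g: "g \<in> carrier G \<rightarrow> carrier D"
begin

interpretation G: monoid G by (rule G)
interpretation D: comm_group D by (rule D)

private lemma g_closed [simp]: "x \<in> carrier G \<Longrightarrow> g x \<in> carrier D"
  using g by blast

private lemma f_closed [simp]: "x \<in> carrier G \<Longrightarrow> y \<in> carrier G \<Longrightarrow> f (x, y) \<in> carrier D"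
  by (rule two_cocycles_closed[OF f])

lemma mult_coboundary_closed:
  "x \<in> carrier G \<Longrightarrow> y \<in> carrier G \<Longrightarrow> mult_coboundary G D f g (x, y) \<in> carrier D"
  by (simp add: mult_coboundary_apply)

lemma mult_coboundary_mult:
  assumes "x \<in> carrier G" "y \<in> carrier G"
  shows "mult_coboundary G D f g (x, y) \<otimes>\<^bsub>D\<^esub> g (x \<otimes>\<^bsub>G\<^esub> y) = f (x, y) \<otimes>\<^bsub>D\<^esub> g x \<otimes>\<^bsub>D\<^esub> g y"
  using assms by (simp add: mult_coboundary_apply D.m_assoc)

lemma mult_coboundary_two_cocycle: "mult_coboundary G D f g \<in> two_cocycles G D"
proof (rule two_cocyclesI)
  show "mult_coboundary G D f g \<in> carrier G \<times> carrier G \<rightarrow>\<^sub>E carrier D"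
    using mult_coboundary_closed by (auto simp: mult_coboundary_def)
next
  fix x y z assume xyz: "x \<in> carrier G" "y \<in> carrier G" "z \<in> carrier G"
  let ?T = "mult_coboundary G D f g"
  have c: "f (x, y) \<in> carrier D" "f (x \<otimes>\<^bsub>G\<^esub> y, z) \<in> carrier D" "f (y, z) \<in> carrier D"
    "f (x, y \<otimes>\<^bsub>G\<^esub> z) \<in> carrier D" "g x \<in> carrier D" "g y \<in> carrier D" "g z \<in> carrier D"
    "g (x \<otimes>\<^bsub>G\<^esub> y) \<in> carrier D" "g (y \<otimes>\<^bsub>G\<^esub> z) \<in> carrier D" "g (x \<otimes>\<^bsub>G\<^esub> y \<otimes>\<^bsub>G\<^esub> z) \<in> carrier D"
    "?T (x, y) \<in> carrier D" "?T (x \<otimes>\<^bsub>G\<^esub> y, z) \<in> carrier D" "?T (y, z) \<in> carrier D"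
    "?T (x, y \<otimes>\<^bsub>G\<^esub> z) \<in> carrier D"
    using xyz mult_coboundary_closed by auto
  let ?K = "g (x \<otimes>\<^bsub>G\<^esub> y) \<otimes>\<^bsub>D\<^esub> g (x \<otimes>\<^bsub>G\<^esub> y \<otimes>\<^bsub>G\<^esub> z) \<otimes>\<^bsub>D\<^esub> g (y \<otimes>\<^bsub>G\<^esub> z)"
  have "(?T (x, y) \<otimes>\<^bsub>D\<^esub> ?T (x \<otimes>\<^bsub>G\<^esub> y, z)) \<otimes>\<^bsub>D\<^esub> ?K
      = (?T (x, y) \<otimes>\<^bsub>D\<^esub> g (x \<otimes>\<^bsub>G\<^esub> y)) \<otimes>\<^bsub>D\<^esub> (?T (x \<otimes>\<^bsub>G\<^esub> y, z) \<otimes>\<^bsub>D\<^esub> g (x \<otimes>\<^bsub>G\<^esub> y \<otimes>\<^bsub>G\<^esub> z))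
        \<otimes>\<^bsub>D\<^esub> g (y \<otimes>\<^bsub>G\<^esub> z)"
    using c by (simp add: D.m_ac)
  also have "\<dots> = (f (x, y) \<otimes>\<^bsub>D\<^esub> f (x \<otimes>\<^bsub>G\<^esub> y, z))
      \<otimes>\<^bsub>D\<^esub> (g x \<otimes>\<^bsub>D\<^esub> g y \<otimes>\<^bsub>D\<^esub> g z \<otimes>\<^bsub>D\<^esub> g (x \<otimes>\<^bsub>G\<^esub> y) \<otimes>\<^bsub>D\<^esub> g (y \<otimes>\<^bsub>G\<^esub> z))"
    by (simp only: mult_coboundary_mult[OF xyz(1,2)] mult_coboundary_mult[OF G.m_closed[OF xyz(1,2)] xyz(3)])
       (use c in \<open>simp add: D.m_ac\<close>)
  also have "\<dots> = (f (y, z) \<otimes>\<^bsub>D\<^esub> f (x, y \<otimes>\<^bsub>G\<^esub> z))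
      \<otimes>\<^bsub>D\<^esub> (g x \<otimes>\<^bsub>D\<^esub> g y \<otimes>\<^bsub>D\<^esub> g z \<otimes>\<^bsub>D\<^esub> g (x \<otimes>\<^bsub>G\<^esub> y) \<otimes>\<^bsub>D\<^esub> g (y \<otimes>\<^bsub>G\<^esub> z))"
    by (simp only: two_cocycles_eq[OF f xyz])
  also have "\<dots> = (?T (y, z) \<otimes>\<^bsub>D\<^esub> g (y \<otimes>\<^bsub>G\<^esub> z)) \<otimes>\<^bsub>D\<^esub> (?T (x, y \<otimes>\<^bsub>G\<^esub> z) \<otimes>\<^bsub>D\<^esub> g (x \<otimes>\<^bsub>G\<^esub> (y \<otimes>\<^bsub>G\<^esub> z)))
        \<otimes>\<^bsub>D\<^esub> g (x \<otimes>\<^bsub>G\<^esub> y)"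
    by (simp only: mult_coboundary_mult[OF xyz(2,3)] mult_coboundary_mult[OF xyz(1) G.m_closed[OF xyz(2,3)]])
       (use c xyz in \<open>simp add: D.m_ac\<close>)
  also have "\<dots> = (?T (y, z) \<otimes>\<^bsub>D\<^esub> ?T (x, y \<otimes>\<^bsub>G\<^esub> z)) \<otimes>\<^bsub>D\<^esub> ?K"
    using c xyz by (simp add: G.m_assoc D.m_ac)
  finally show "?T (x, y) \<otimes>\<^bsub>D\<^esub> ?T (x \<otimes>\<^bsub>G\<^esub> y, z) = ?T (y, z) \<otimes>\<^bsub>D\<^esub> ?T (x, y \<otimes>\<^bsub>G\<^esub> z)"
    using c by simp
qed

lemma cohomologous_mult_coboundary: "(mult_coboundary G D f g, f) \<in> cohomologous G D"
  unfolding cohomologous_def using mult_coboundary_two_cocycle f g by (auto simp: mult_coboundary_apply)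

end

lemma two_cocycles_extensional: "f \<in> two_cocycles G D \<Longrightarrow> f \<in> extensional (carrier G \<times> carrier G)"
  unfolding two_cocycles_def by (auto simp: PiE_iff)

lemma mult_coboundary_extensional: "mult_coboundary G D f g \<in> extensional (carrier G \<times> carrier G)"
  unfolding mult_coboundary_def by (rule restrict_extensional)

context
  fixes G :: "('a, 'b) monoid_scheme" and D :: "('d, 'e) monoid_scheme"
  assumes G: "monoid G" and D: "comm_group D"
begin

interpretation G: monoid G by (rule G)
interpretation D: comm_group D by (rule D)

lemma mult_coboundary_one:
  assumes f: "f \<in> two_cocycles G D"
  shows "mult_coboundary G D f (\<lambda>_. \<one>\<^bsub>D\<^esub>) = f"
  by (rule extensionalityI[OF mult_coboundary_extensional two_cocycles_extensional[OF f]])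
     (auto simp: mult_coboundary_apply two_cocycles_closed[OF f])

lemma mult_coboundary_mult_coboundary:
  assumes f: "f \<in> two_cocycles G D" and g: "g \<in> carrier G \<rightarrow> carrier D" and h: "h \<in> carrier G \<rightarrow> carrier D"
  shows "mult_coboundary G D (mult_coboundary G D f g) h = mult_coboundary G D f (\<lambda>x. g x \<otimes>\<^bsub>D\<^esub> h x)"
proof (rule extensionalityI[OF mult_coboundary_extensional mult_coboundary_extensional])
  fix p assume "p \<in> carrier G \<times> carrier G"
  then obtain x y where p: "p = (x, y)" "x \<in> carrier G" "y \<in> carrier G" by auto
  have c: "f (x, y) \<in> carrier D" "g x \<in> carrier D" "g y \<in> carrier D" "g (x \<otimes>\<^bsub>G\<^esub> y) \<in> carrier D"
    "h x \<in> carrier D" "h y \<in> carrier D" "h (x \<otimes>\<^bsub>G\<^esub> y) \<in> carrier D"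
    using p two_cocycles_closed[OF f] g h by auto
  show "mult_coboundary G D (mult_coboundary G D f g) h p = mult_coboundary G D f (\<lambda>x. g x \<otimes>\<^bsub>D\<^esub> h x) p"
    using p(2,3) c unfolding p(1) by (simp add: mult_coboundary_apply D.inv_mult D.m_ac)
qed

lemma cohomologousE:
  assumes "(f, f') \<in> cohomologous G D"
  obtains g where "g \<in> carrier G \<rightarrow> carrier D" "f = mult_coboundary G D f' g"
proof -
  from assms obtain g where f: "f \<in> two_cocycles G D" and g: "g \<in> carrier G \<rightarrow> carrier D"
    and eq: "\<And>x y. x \<in> carrier G \<Longrightarrow> y \<in> carrier G \<Longrightarrow>
      f (x, y) = f' (x, y) \<otimes>\<^bsub>D\<^esub> (g x \<otimes>\<^bsub>D\<^esub> g y \<otimes>\<^bsub>D\<^esub> inv\<^bsub>D\<^esub> (g (x \<otimes>\<^bsub>G\<^esub> y)))"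
    unfolding cohomologous_def by auto
  have "f = mult_coboundary G D f' g"
    by (rule extensionalityI[OF two_cocycles_extensional[OF f] mult_coboundary_extensional])
       (auto simp: eq mult_coboundary_apply)
  then show thesis using that g by blast
qed

lemma cohomologous_sym:
  assumes ff': "(f, f') \<in> cohomologous G D"
  shows "(f', f) \<in> cohomologous G D"
proof -
  have f: "f \<in> two_cocycles G D" and f': "f' \<in> two_cocycles G D"
    using ff' unfolding cohomologous_def by auto
  obtain g where g: "g \<in> carrier G \<rightarrow> carrier D" and f_eq: "f = mult_coboundary G D f' g"
    using ff' by (rule cohomologousE)
  have ig: "(\<lambda>x. inv\<^bsub>D\<^esub> g x) \<in> carrier G \<rightarrow> carrier D" using g by auto
  have "mult_coboundary G D f (\<lambda>x. inv\<^bsub>D\<^esub> g x) = mult_coboundary G D f' (\<lambda>x. g x \<otimes>\<^bsub>D\<^esub> inv\<^bsub>D\<^esub> g x)"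
    unfolding f_eq by (rule mult_coboundary_mult_coboundary[OF f' g ig])
  also have "\<dots> = mult_coboundary G D f' (\<lambda>_. \<one>\<^bsub>D\<^esub>)"
    by (rule mult_coboundary_cong[OF G]) (simp add: funcset_mem[OF g])
  also have "\<dots> = f'" by (rule mult_coboundary_one[OF f'])
  finally show ?thesis using cohomologous_mult_coboundary[OF G D f ig] by simp
qed

lemma cohomologous_trans:
  assumes 12: "(f\<^sub>1, f\<^sub>2) \<in> cohomologous G D" and 23: "(f\<^sub>2, f\<^sub>3) \<in> cohomologous G D"
  shows "(f\<^sub>1, f\<^sub>3) \<in> cohomologous G D"
proof -
  obtain g where g: "g \<in> carrier G \<rightarrow> carrier D" and f\<^sub>1: "f\<^sub>1 = mult_coboundary G D f\<^sub>2 g"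
    using 12 by (rule cohomologousE)
  obtain h where h: "h \<in> carrier G \<rightarrow> carrier D" and f\<^sub>2: "f\<^sub>2 = mult_coboundary G D f\<^sub>3 h"
    using 23 by (rule cohomologousE)
  have f\<^sub>3: "f\<^sub>3 \<in> two_cocycles G D" using 23 unfolding cohomologous_def by blast
  have "f\<^sub>1 = mult_coboundary G D f\<^sub>3 (\<lambda>x. h x \<otimes>\<^bsub>D\<^esub> g x)"
    unfolding f\<^sub>1 f\<^sub>2 by (rule mult_coboundary_mult_coboundary[OF f\<^sub>3 h g])
  moreover have "(\<lambda>x. h x \<otimes>\<^bsub>D\<^esub> g x) \<in> carrier G \<rightarrow> carrier D" using g h by auto
  ultimately show ?thesis using cohomologous_mult_coboundary[OF G D f\<^sub>3] by metis
qed

lemma equiv_cohomologous: "equiv (two_cocycles G D) (cohomologous G D)"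
proof (rule equivI)
  show "cohomologous G D \<subseteq> two_cocycles G D \<times> two_cocycles G D"
    unfolding cohomologous_def by auto
  show "sym (cohomologous G D)" by (rule symI) (rule cohomologous_sym)
  show "trans (cohomologous G D)" by (rule transI) (rule cohomologous_trans)
  show "refl_on (two_cocycles G D) (cohomologous G D)"
  proof (rule refl_onI)
    fix f assume f: "f \<in> two_cocycles G D"
    have "(mult_coboundary G D f (\<lambda>_. \<one>\<^bsub>D\<^esub>), f) \<in> cohomologous G D"
      by (rule cohomologous_mult_coboundary[OF G D f]) simp
    then show "(f, f) \<in> cohomologous G D" by (simp only: mult_coboundary_one[OF f])
  qed
qed

end

section \<open>Inflation\<close>

context normal
begin

lemma rcos_in_FactGroup: "x \<in> carrier G \<Longrightarrow> H #> x \<in> carrier (G Mod H)"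
  by (simp add: carrier_FactGroup)

lemma FactGroup_carrier_cases:
  assumes "U \<in> carrier (G Mod H)"
  obtains x where "x \<in> carrier G" "U = H #> x"
  using assms by (auto simp: carrier_FactGroup)

lemma inflate_cocycle_apply:
  "x \<in> carrier G \<Longrightarrow> y \<in> carrier G \<Longrightarrow> inflate_cocycle G H f (x, y) = f (H #> x, H #> y)"
  unfolding inflate_cocycle_def by simp

lemma inflate_two_cocycle:
  assumes f: "f \<in> two_cocycles (G Mod H) D"
  shows "inflate_cocycle G H f \<in> two_cocycles G D"
proof (rule two_cocyclesI)
  show "inflate_cocycle G H f \<in> carrier G \<times> carrier G \<rightarrow>\<^sub>E carrier D"
    unfolding inflate_cocycle_def using two_cocycles_closed[OF f] rcos_in_FactGroup by auto
next
  fix x y z assume xyz: "x \<in> carrier G" "y \<in> carrier G" "z \<in> carrier G"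
  then show "inflate_cocycle G H f (x, y) \<otimes>\<^bsub>D\<^esub> inflate_cocycle G H f (x \<otimes> y, z)
      = inflate_cocycle G H f (y, z) \<otimes>\<^bsub>D\<^esub> inflate_cocycle G H f (x, y \<otimes> z)"
    using two_cocycles_eq[OF f rcos_in_FactGroup rcos_in_FactGroup rcos_in_FactGroup, of x y z]
    by (simp add: inflate_cocycle_apply rcos_sum)
qed

lemma inflate_mult_coboundary:
  "inflate_cocycle G H (mult_coboundary (G Mod H) D f g)
     = mult_coboundary G D (inflate_cocycle G H f) (\<lambda>x. g (H #> x))"
  unfolding inflate_cocycle_def mult_coboundary_def
  by (rule restrict_ext) (auto simp: rcos_in_FactGroup rcos_sum)

lemma inflate_cohomologous:
  assumes D: "comm_group D" and ff': "(f, f') \<in> cohomologous (G Mod H) D"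
  shows "(inflate_cocycle G H f, inflate_cocycle G H f') \<in> cohomologous G D"
proof -
  have Q: "monoid (G Mod H)" using factorgroup_is_group group.is_monoid by blast
  obtain g where g: "g \<in> carrier (G Mod H) \<rightarrow> carrier D" and f: "f = mult_coboundary (G Mod H) D f' g"
    using ff' by (rule cohomologousE[OF Q D])
  have f': "f' \<in> two_cocycles (G Mod H) D" using ff' unfolding cohomologous_def by blast
  have "(\<lambda>x. g (H #> x)) \<in> carrier G \<rightarrow> carrier D" using g rcos_in_FactGroup by auto
  then show ?thesis
    unfolding f inflate_mult_coboundary
    by (rule cohomologous_mult_coboundary[OF is_monoid D inflate_two_cocycle[OF f']])
qed

lemma inflation_class:
  assumes D: "comm_group D" and h: "h \<in> two_cocycles (G Mod H) D"
  shows "inflation G H D (cohomologous (G Mod H) D `` {h}) = cohomologous G D `` {inflate_cocycle G H h}"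
proof -
  have Q: "monoid (G Mod H)" using factorgroup_is_group group.is_monoid by blast
  let ?C = "cohomologous (G Mod H) D `` {h}"
  have "h \<in> ?C" by (rule equiv_class_self[OF equiv_cohomologous[OF Q D] h])
  then have "(SOME h'. h' \<in> ?C) \<in> ?C" by (rule someI[where P="\<lambda>h'. h' \<in> ?C"])
  then have "(h, SOME h'. h' \<in> ?C) \<in> cohomologous (G Mod H) D" by simp
  then have "(inflate_cocycle G H h, inflate_cocycle G H (SOME h'. h' \<in> ?C)) \<in> cohomologous G D"
    by (rule inflate_cohomologous[OF D])
  then show ?thesis
    unfolding inflation_def by (rule equiv_class_eq[OF equiv_cohomologous[OF is_monoid D], symmetric])
qed

lemma inflation_surjective:
  assumes D: "comm_group D"
    and lift: "\<And>f. f \<in> two_cocycles G D \<Longrightarrow>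
      \<exists>h \<in> two_cocycles (G Mod H) D. (inflate_cocycle G H h, f) \<in> cohomologous G D"
  shows "inflation G H D ` H2 (G Mod H) D = H2 G D"
proof
  show "inflation G H D ` H2 (G Mod H) D \<subseteq> H2 G D"
  proof
    fix U assume "U \<in> inflation G H D ` H2 (G Mod H) D"
    then obtain h where h: "h \<in> two_cocycles (G Mod H) D"
      and U: "U = inflation G H D (cohomologous (G Mod H) D `` {h})"
      unfolding H2_def by (auto elim: quotientE)
    show "U \<in> H2 G D" unfolding U inflation_class[OF D h] H2_def
      by (rule quotientI[OF inflate_two_cocycle[OF h]])
  qed
  show "H2 G D \<subseteq> inflation G H D ` H2 (G Mod H) D"
  proof
    fix U assume "U \<in> H2 G D"
    then obtain f where f: "f \<in> two_cocycles G D" and U: "U = cohomologous G D `` {f}"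
      unfolding H2_def by (auto elim: quotientE)
    obtain h where h: "h \<in> two_cocycles (G Mod H) D" and hf: "(inflate_cocycle G H h, f) \<in> cohomologous G D"
      using lift[OF f] by blast
    have "U = inflation G H D (cohomologous (G Mod H) D `` {h})"
      unfolding U inflation_class[OF D h] by (rule equiv_class_eq[OF equiv_cohomologous[OF is_monoid D] hf, symmetric])
    moreover have "cohomologous (G Mod H) D `` {h} \<in> H2 (G Mod H) D"
      unfolding H2_def using h by (rule quotientI)
    ultimately show "U \<in> inflation G H D ` H2 (G Mod H) D" by blast
  qed
qed

lemma two_cocycle_factors_through_quotient:
  assumes f: "f \<in> two_cocycles G D"
    and left: "\<And>h x y. h \<in> H \<Longrightarrow> x \<in> carrier G \<Longrightarrow> y \<in> carrier G \<Longrightarrow> f (h \<otimes> x, y) = f (x, y)"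
    and right: "\<And>h x y. h \<in> H \<Longrightarrow> x \<in> carrier G \<Longrightarrow> y \<in> carrier G \<Longrightarrow> f (x, h \<otimes> y) = f (x, y)"
  obtains f' where "f' \<in> two_cocycles (G Mod H) D" "inflate_cocycle G H f' = f"
proof -
  define rep where "rep U = (SOME x. x \<in> U)" for U :: "'a set"
  have rep: "\<exists>h\<in>H. rep (H #> x) = h \<otimes> x" if x: "x \<in> carrier G" for x
  proof -
    have "x \<in> H #> x" by (rule rcos_self[OF x subgroup_axioms])
    then have "rep (H #> x) \<in> H #> x" unfolding rep_def by (rule someI[where P="\<lambda>y. y \<in> H #> x"])
    then show ?thesis unfolding r_coset_def by blast
  qed
  have f_rep: "f (rep (H #> x), rep (H #> y)) = f (x, y)" if x: "x \<in> carrier G" and y: "y \<in> carrier G" for x y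
  proof -
    obtain h k where h: "h \<in> H" "rep (H #> x) = h \<otimes> x" and k: "k \<in> H" "rep (H #> y) = k \<otimes> y"
      using rep[OF x] rep[OF y] by blast
    have "k \<otimes> y \<in> carrier G" using k(1) y subset by blast
    then show ?thesis unfolding h(2) k(2) using left[OF h(1) x] right[OF k(1) x y] by simp
  qed
  define f' where "f' = (\<lambda>(U, V) \<in> carrier (G Mod H) \<times> carrier (G Mod H). f (rep U, rep V))"
  have f'_apply: "f' (H #> x, H #> y) = f (x, y)" if "x \<in> carrier G" "y \<in> carrier G" for x y
    unfolding f'_def using that f_rep rcos_in_FactGroup by simp
  have "f' \<in> two_cocycles (G Mod H) D"
  proof (rule two_cocyclesI)
    have "f' (U, V) \<in> carrier D" if "U \<in> carrier (G Mod H)" "V \<in> carrier (G Mod H)" for U V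
      using that by (elim FactGroup_carrier_cases) (simp add: f'_apply two_cocycles_closed[OF f])
    then show "f' \<in> carrier (G Mod H) \<times> carrier (G Mod H) \<rightarrow>\<^sub>E carrier D"
      unfolding f'_def by auto
  next
    fix U V W assume "U \<in> carrier (G Mod H)" "V \<in> carrier (G Mod H)" "W \<in> carrier (G Mod H)"
    then show "f' (U, V) \<otimes>\<^bsub>D\<^esub> f' (U \<otimes>\<^bsub>G Mod H\<^esub> V, W) = f' (V, W) \<otimes>\<^bsub>D\<^esub> f' (U, V \<otimes>\<^bsub>G Mod H\<^esub> W)"
      by (elim FactGroup_carrier_cases) (simp add: rcos_sum f'_apply two_cocycles_eq[OF f])
  qed
  moreover have "inflate_cocycle G H f' = f"
    by (rule extensionalityI[OF _ two_cocycles_extensional[OF f]])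
       (auto simp: inflate_cocycle_def f'_apply)
  ultimately show thesis by (rule that)
qed

end

section \<open>The commutator pairing of a cocycle\<close>

lemma (in comm_group) div_eq_div_mult_div:
  assumes "a \<in> carrier G" "b \<in> carrier G" "c \<in> carrier G" "d \<in> carrier G" "e \<in> carrier G" "g \<in> carrier G"
    and "a \<otimes> d \<otimes> g = c \<otimes> e \<otimes> b"
  shows "a \<otimes> inv b = (c \<otimes> inv d) \<otimes> (e \<otimes> inv g)"
proof -
  have "(a \<otimes> inv b) \<otimes> (b \<otimes> d \<otimes> g) = (a \<otimes> d \<otimes> g) \<otimes> (inv b \<otimes> b)"
    using assms(1-6) by (simp only: m_ac m_closed inv_closed)
  also have "\<dots> = (c \<otimes> e \<otimes> b) \<otimes> (inv d \<otimes> d) \<otimes> (inv g \<otimes> g)"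
    using assms by simp
  also have "\<dots> = ((c \<otimes> inv d) \<otimes> (e \<otimes> inv g)) \<otimes> (b \<otimes> d \<otimes> g)"
    using assms(1-6) by (simp only: m_ac m_closed inv_closed)
  finally show ?thesis using assms(1-6) by simp
qed

locale two_cocycle = G: group G + D: comm_group D
  for G :: "('a, 'b) monoid_scheme" and D :: "('d, 'e) monoid_scheme" +
  fixes f :: "'a \<times> 'a \<Rightarrow> 'd"
  assumes two_cocycle: "f \<in> two_cocycles G D"
begin

lemma closed [simp]: "x \<in> carrier G \<Longrightarrow> y \<in> carrier G \<Longrightarrow> f (x, y) \<in> carrier D"
  by (rule two_cocycles_closed[OF two_cocycle])

lemma cocycle_eq:
  "x \<in> carrier G \<Longrightarrow> y \<in> carrier G \<Longrightarrow> z \<in> carrier G \<Longrightarrow>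
    f (x, y) \<otimes>\<^bsub>D\<^esub> f (x \<otimes>\<^bsub>G\<^esub> y, z) = f (y, z) \<otimes>\<^bsub>D\<^esub> f (x, y \<otimes>\<^bsub>G\<^esub> z)"
  by (rule two_cocycles_eq[OF two_cocycle])

lemma right_one_eq_left_one: "x \<in> carrier G \<Longrightarrow> z \<in> carrier G \<Longrightarrow> f (x, \<one>\<^bsub>G\<^esub>) = f (\<one>\<^bsub>G\<^esub>, z)"
  using cocycle_eq[of x "\<one>\<^bsub>G\<^esub>" z] by simp

lemma right_one: "x \<in> carrier G \<Longrightarrow> f (x, \<one>\<^bsub>G\<^esub>) = f (\<one>\<^bsub>G\<^esub>, \<one>\<^bsub>G\<^esub>)"
  by (rule right_one_eq_left_one) simp_all

lemma left_one: "x \<in> carrier G \<Longrightarrow> f (\<one>\<^bsub>G\<^esub>, x) = f (\<one>\<^bsub>G\<^esub>, \<one>\<^bsub>G\<^esub>)"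
  by (rule right_one_eq_left_one[symmetric]) simp_all

definition skew :: "'a \<Rightarrow> 'a \<Rightarrow> 'd" where
  "skew y x = f (x, y) \<otimes>\<^bsub>D\<^esub> inv\<^bsub>D\<^esub> f (y, x)"

lemma skew_closed [simp]: "x \<in> carrier G \<Longrightarrow> y \<in> carrier G \<Longrightarrow> skew y x \<in> carrier D"
  unfolding skew_def by simp

lemma skew_eq_one_iff: "x \<in> carrier G \<Longrightarrow> y \<in> carrier G \<Longrightarrow> skew y x = \<one>\<^bsub>D\<^esub> \<longleftrightarrow> f (x, y) = f (y, x)"
  unfolding skew_def by (simp add: D.inv_solve_right')

lemma skew_one: "y \<in> carrier G \<Longrightarrow> skew y \<one>\<^bsub>G\<^esub> = \<one>\<^bsub>D\<^esub>"
  by (simp add: skew_eq_one_iff right_one_eq_left_one[of y y])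

lemma commuting_cocycle_eq:
  assumes x: "x\<^sub>1 \<in> carrier G" "x\<^sub>2 \<in> carrier G" and y: "y \<in> carrier G"
    and comm: "x\<^sub>1 \<otimes>\<^bsub>G\<^esub> y = y \<otimes>\<^bsub>G\<^esub> x\<^sub>1" "x\<^sub>2 \<otimes>\<^bsub>G\<^esub> y = y \<otimes>\<^bsub>G\<^esub> x\<^sub>2"
  shows "f (x\<^sub>1 \<otimes>\<^bsub>G\<^esub> x\<^sub>2, y) \<otimes>\<^bsub>D\<^esub> f (y, x\<^sub>1) \<otimes>\<^bsub>D\<^esub> f (y, x\<^sub>2)
    = f (x\<^sub>1, y) \<otimes>\<^bsub>D\<^esub> f (x\<^sub>2, y) \<otimes>\<^bsub>D\<^esub> f (y, x\<^sub>1 \<otimes>\<^bsub>G\<^esub> x\<^sub>2)"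
proof -
  have e1: "f (x\<^sub>1, x\<^sub>2) \<otimes>\<^bsub>D\<^esub> f (x\<^sub>1 \<otimes>\<^bsub>G\<^esub> x\<^sub>2, y) = f (x\<^sub>2, y) \<otimes>\<^bsub>D\<^esub> f (x\<^sub>1, y \<otimes>\<^bsub>G\<^esub> x\<^sub>2)"
    using cocycle_eq[of x\<^sub>1 x\<^sub>2 y] x y comm by (simp add: G.m_assoc)
  have e2: "f (x\<^sub>1, y) \<otimes>\<^bsub>D\<^esub> f (x\<^sub>1 \<otimes>\<^bsub>G\<^esub> y, x\<^sub>2) = f (y, x\<^sub>2) \<otimes>\<^bsub>D\<^esub> f (x\<^sub>1, y \<otimes>\<^bsub>G\<^esub> x\<^sub>2)"
    using cocycle_eq[of x\<^sub>1 y x\<^sub>2] x y by simp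
  have e3: "f (y, x\<^sub>1) \<otimes>\<^bsub>D\<^esub> f (x\<^sub>1 \<otimes>\<^bsub>G\<^esub> y, x\<^sub>2) = f (x\<^sub>1, x\<^sub>2) \<otimes>\<^bsub>D\<^esub> f (y, x\<^sub>1 \<otimes>\<^bsub>G\<^esub> x\<^sub>2)"
    using cocycle_eq[of y x\<^sub>1 x\<^sub>2] x y comm by (simp add: G.m_assoc)
  let ?K = "f (x\<^sub>1, x\<^sub>2) \<otimes>\<^bsub>D\<^esub> f (x\<^sub>1 \<otimes>\<^bsub>G\<^esub> y, x\<^sub>2) \<otimes>\<^bsub>D\<^esub> f (x\<^sub>1, y \<otimes>\<^bsub>G\<^esub> x\<^sub>2)"
  have "f (x\<^sub>1 \<otimes>\<^bsub>G\<^esub> x\<^sub>2, y) \<otimes>\<^bsub>D\<^esub> f (y, x\<^sub>1) \<otimes>\<^bsub>D\<^esub> f (y, x\<^sub>2) \<otimes>\<^bsub>D\<^esub> ?K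
      = (f (x\<^sub>1, x\<^sub>2) \<otimes>\<^bsub>D\<^esub> f (x\<^sub>1 \<otimes>\<^bsub>G\<^esub> x\<^sub>2, y)) \<otimes>\<^bsub>D\<^esub> (f (y, x\<^sub>1) \<otimes>\<^bsub>D\<^esub> f (x\<^sub>1 \<otimes>\<^bsub>G\<^esub> y, x\<^sub>2))
        \<otimes>\<^bsub>D\<^esub> (f (y, x\<^sub>2) \<otimes>\<^bsub>D\<^esub> f (x\<^sub>1, y \<otimes>\<^bsub>G\<^esub> x\<^sub>2))"
    using x y by (simp add: D.m_ac)
  also have "\<dots> = (f (x\<^sub>2, y) \<otimes>\<^bsub>D\<^esub> f (x\<^sub>1, y \<otimes>\<^bsub>G\<^esub> x\<^sub>2)) \<otimes>\<^bsub>D\<^esub> (f (x\<^sub>1, x\<^sub>2) \<otimes>\<^bsub>D\<^esub> f (y, x\<^sub>1 \<otimes>\<^bsub>G\<^esub> x\<^sub>2))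
        \<otimes>\<^bsub>D\<^esub> (f (x\<^sub>1, y) \<otimes>\<^bsub>D\<^esub> f (x\<^sub>1 \<otimes>\<^bsub>G\<^esub> y, x\<^sub>2))"
    by (simp only: e1 e3 e2)
  also have "\<dots> = f (x\<^sub>1, y) \<otimes>\<^bsub>D\<^esub> f (x\<^sub>2, y) \<otimes>\<^bsub>D\<^esub> f (y, x\<^sub>1 \<otimes>\<^bsub>G\<^esub> x\<^sub>2) \<otimes>\<^bsub>D\<^esub> ?K"
    using x y by (simp add: D.m_ac)
  finally show ?thesis using x y by simp
qed

lemma skew_mult:
  assumes x: "x\<^sub>1 \<in> carrier G" "x\<^sub>2 \<in> carrier G" and y: "y \<in> carrier G"
    and comm: "x\<^sub>1 \<otimes>\<^bsub>G\<^esub> y = y \<otimes>\<^bsub>G\<^esub> x\<^sub>1" "x\<^sub>2 \<otimes>\<^bsub>G\<^esub> y = y \<otimes>\<^bsub>G\<^esub> x\<^sub>2"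
  shows "skew y (x\<^sub>1 \<otimes>\<^bsub>G\<^esub> x\<^sub>2) = skew y x\<^sub>1 \<otimes>\<^bsub>D\<^esub> skew y x\<^sub>2"
  using commuting_cocycle_eq[OF x y comm]
  unfolding skew_def using x y by (intro D.div_eq_div_mult_div) simp_all

lemma skew_inv:
  assumes a: "a \<in> carrier G" and y: "y \<in> carrier G"
    and comm: "a \<otimes>\<^bsub>G\<^esub> y = y \<otimes>\<^bsub>G\<^esub> a" "inv\<^bsub>G\<^esub> a \<otimes>\<^bsub>G\<^esub> y = y \<otimes>\<^bsub>G\<^esub> inv\<^bsub>G\<^esub> a"
  shows "skew y (inv\<^bsub>G\<^esub> a) = inv\<^bsub>D\<^esub> skew y a"
proof -
  have "skew y (inv\<^bsub>G\<^esub> a) \<otimes>\<^bsub>D\<^esub> skew y a = skew y \<one>\<^bsub>G\<^esub>"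
    using skew_mult[OF G.inv_closed[OF a] a y comm(2,1)] a by simp
  then have "skew y (inv\<^bsub>G\<^esub> a) \<otimes>\<^bsub>D\<^esub> skew y a = \<one>\<^bsub>D\<^esub>" by (simp add: skew_one[OF y])
  then show ?thesis by (rule D.inv_equality[symmetric]) (simp_all add: a y)
qed

text \<open>On \<open>S\<close>, \<open>skew y\<close> is a homomorphism into the abelian group \<open>D\<close>, so it kills \<open>S'\<close>.\<close>

lemma symmetric_on_derived:
  assumes S: "subgroup S G" and y: "y \<in> carrier G" and comm: "\<And>s. s \<in> S \<Longrightarrow> s \<otimes>\<^bsub>G\<^esub> y = y \<otimes>\<^bsub>G\<^esub> s"
    and z: "z \<in> derived G S"
  shows "f (z, y) = f (y, z)"
proof -
  have SG: "s \<in> S \<Longrightarrow> s \<in> carrier G" for s using subgroup.subset[OF S] by blast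
  have mult: "skew y (a \<otimes>\<^bsub>G\<^esub> b) = skew y a \<otimes>\<^bsub>D\<^esub> skew y b" if "a \<in> S" "b \<in> S" for a b
    using skew_mult[OF SG SG y comm comm] that by blast
  have inv: "skew y (inv\<^bsub>G\<^esub> a) = inv\<^bsub>D\<^esub> skew y a" if a: "a \<in> S" for a
    using skew_inv[OF SG[OF a] y comm[OF a] comm[OF subgroup.m_inv_closed[OF S a]]] .
  define N where "N = {x \<in> S. skew y x = \<one>\<^bsub>D\<^esub>}"
  have N: "subgroup N G"
  proof (rule G.subgroupI)
    show "N \<subseteq> carrier G" unfolding N_def using SG by blast
    have "\<one>\<^bsub>G\<^esub> \<in> N" unfolding N_def using subgroup.one_closed[OF S] skew_one[OF y] by blast
    then show "N \<noteq> {}" by blast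
  next
    fix a assume "a \<in> N"
    then show "inv\<^bsub>G\<^esub> a \<in> N" unfolding N_def using inv subgroup.m_inv_closed[OF S] by simp
  next
    fix a b assume "a \<in> N" "b \<in> N"
    then show "a \<otimes>\<^bsub>G\<^esub> b \<in> N" unfolding N_def using mult subgroup.m_closed[OF S] by simp
  qed
  have "derived_set G S \<subseteq> N"
  proof
    fix w assume "w \<in> derived_set G S"
    then obtain a b where ab: "a \<in> S" "b \<in> S"
      and w: "w = a \<otimes>\<^bsub>G\<^esub> b \<otimes>\<^bsub>G\<^esub> inv\<^bsub>G\<^esub> a \<otimes>\<^bsub>G\<^esub> inv\<^bsub>G\<^esub> b" by blast
    have S': "inv\<^bsub>G\<^esub> a \<in> S" "inv\<^bsub>G\<^esub> b \<in> S" "a \<otimes>\<^bsub>G\<^esub> b \<in> S" "a \<otimes>\<^bsub>G\<^esub> b \<otimes>\<^bsub>G\<^esub> inv\<^bsub>G\<^esub> a \<in> S"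
      using ab by (simp_all add: subgroup.m_inv_closed[OF S] subgroup.m_closed[OF S])
    have "skew y w = skew y a \<otimes>\<^bsub>D\<^esub> skew y b \<otimes>\<^bsub>D\<^esub> inv\<^bsub>D\<^esub> skew y a \<otimes>\<^bsub>D\<^esub> inv\<^bsub>D\<^esub> skew y b"
      unfolding w using ab S' by (simp add: mult inv)
    also have "\<dots> = (skew y a \<otimes>\<^bsub>D\<^esub> inv\<^bsub>D\<^esub> skew y a) \<otimes>\<^bsub>D\<^esub> (skew y b \<otimes>\<^bsub>D\<^esub> inv\<^bsub>D\<^esub> skew y b)"
      using ab SG y by (simp only: D.m_ac D.m_closed D.inv_closed skew_closed)
    finally have "skew y w = \<one>\<^bsub>D\<^esub>" using ab SG y by simp
    moreover have "w \<in> S" unfolding w using S' by (simp add: subgroup.m_closed[OF S])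
    ultimately show "w \<in> N" unfolding N_def by blast
  qed
  then have "derived G S \<subseteq> N" unfolding derived_def by (rule G.generate_subgroup_incl[OF _ N])
  then show ?thesis using z SG skew_eq_one_iff[OF _ y] unfolding N_def by blast
qed

end

section \<open>Symmetric cocycles on abelian groups\<close>

definition cocycle_extension ::
    "('a, 'b) monoid_scheme \<Rightarrow> ('d, 'e) monoid_scheme \<Rightarrow> ('a \<times> 'a \<Rightarrow> 'd) \<Rightarrow> ('d \<times> 'a) monoid" where
  "cocycle_extension G D f =
    \<lparr>carrier = carrier D \<times> carrier G,
     monoid.mult = (\<lambda>(d, x) (e, y). (d \<otimes>\<^bsub>D\<^esub> e \<otimes>\<^bsub>D\<^esub> f (x, y), x \<otimes>\<^bsub>G\<^esub> y)),
     one = (inv\<^bsub>D\<^esub> f (\<one>\<^bsub>G\<^esub>, \<one>\<^bsub>G\<^esub>), \<one>\<^bsub>G\<^esub>)\<rparr>"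

context two_cocycle
begin

abbreviation (input) extension where "extension \<equiv> cocycle_extension G D f"

lemma extension_carrier [simp]: "carrier extension = carrier D \<times> carrier G"
  by (simp add: cocycle_extension_def)

lemma extension_mult [simp]: "(d, x) \<otimes>\<^bsub>extension\<^esub> (e, y) = (d \<otimes>\<^bsub>D\<^esub> e \<otimes>\<^bsub>D\<^esub> f (x, y), x \<otimes>\<^bsub>G\<^esub> y)"
  by (simp add: cocycle_extension_def)

lemma extension_one [simp]: "\<one>\<^bsub>extension\<^esub> = (inv\<^bsub>D\<^esub> f (\<one>\<^bsub>G\<^esub>, \<one>\<^bsub>G\<^esub>), \<one>\<^bsub>G\<^esub>)"
  by (simp add: cocycle_extension_def)

lemma extension_comm_group:
  assumes G: "comm_group G" and sym: "\<And>x y. x \<in> carrier G \<Longrightarrow> y \<in> carrier G \<Longrightarrow> f (x, y) = f (y, x)"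
  shows "comm_group extension"
proof (rule comm_groupI)
  interpret G': comm_group G by (rule G)
  fix p q assume "p \<in> carrier extension" "q \<in> carrier extension"
  then obtain d x e y where pq: "p = (d, x)" "q = (e, y)" and c: "d \<in> carrier D" "e \<in> carrier D" "x \<in> carrier G" "y \<in> carrier G"
    by auto
  show "p \<otimes>\<^bsub>extension\<^esub> q \<in> carrier extension" using c unfolding pq by simp
  show "p \<otimes>\<^bsub>extension\<^esub> q = q \<otimes>\<^bsub>extension\<^esub> p"
    using c sym[of x y] G'.m_comm[of x y] unfolding pq by (simp add: D.m_ac)
next
  show "\<one>\<^bsub>extension\<^esub> \<in> carrier extension" by simp
next
  fix p q r assume "p \<in> carrier extension" "q \<in> carrier extension" "r \<in> carrier extension"
  then obtain d x e y k z where pqr: "p = (d, x)" "q = (e, y)" "r = (k, z)"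
    and c: "d \<in> carrier D" "e \<in> carrier D" "k \<in> carrier D" "x \<in> carrier G" "y \<in> carrier G" "z \<in> carrier G"
    by auto
  have "d \<otimes>\<^bsub>D\<^esub> e \<otimes>\<^bsub>D\<^esub> f (x, y) \<otimes>\<^bsub>D\<^esub> k \<otimes>\<^bsub>D\<^esub> f (x \<otimes>\<^bsub>G\<^esub> y, z)
      = (d \<otimes>\<^bsub>D\<^esub> e \<otimes>\<^bsub>D\<^esub> k) \<otimes>\<^bsub>D\<^esub> (f (x, y) \<otimes>\<^bsub>D\<^esub> f (x \<otimes>\<^bsub>G\<^esub> y, z))"
    using c by (simp add: D.m_ac)
  also have "\<dots> = (d \<otimes>\<^bsub>D\<^esub> e \<otimes>\<^bsub>D\<^esub> k) \<otimes>\<^bsub>D\<^esub> (f (y, z) \<otimes>\<^bsub>D\<^esub> f (x, y \<otimes>\<^bsub>G\<^esub> z))"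
    using c by (simp add: cocycle_eq)
  also have "\<dots> = d \<otimes>\<^bsub>D\<^esub> (e \<otimes>\<^bsub>D\<^esub> k \<otimes>\<^bsub>D\<^esub> f (y, z)) \<otimes>\<^bsub>D\<^esub> f (x, y \<otimes>\<^bsub>G\<^esub> z)"
    using c by (simp add: D.m_ac)
  finally show "p \<otimes>\<^bsub>extension\<^esub> q \<otimes>\<^bsub>extension\<^esub> r = p \<otimes>\<^bsub>extension\<^esub> (q \<otimes>\<^bsub>extension\<^esub> r)"
    using c unfolding pqr by (simp add: G.m_assoc)
next
  fix p assume "p \<in> carrier extension"
  then obtain d x where p: "p = (d, x)" and c: "d \<in> carrier D" "x \<in> carrier G" by auto
  show "\<one>\<^bsub>extension\<^esub> \<otimes>\<^bsub>extension\<^esub> p = p"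
    using c unfolding p by (simp add: left_one[OF c(2)] D.m_assoc D.m_lcomm[of "inv\<^bsub>D\<^esub> f (\<one>\<^bsub>G\<^esub>, \<one>\<^bsub>G\<^esub>)" d])
  let ?q = "(inv\<^bsub>D\<^esub> f (\<one>\<^bsub>G\<^esub>, \<one>\<^bsub>G\<^esub>) \<otimes>\<^bsub>D\<^esub> inv\<^bsub>D\<^esub> d \<otimes>\<^bsub>D\<^esub> inv\<^bsub>D\<^esub> f (inv\<^bsub>G\<^esub> x, x), inv\<^bsub>G\<^esub> x)"
  have "?q \<otimes>\<^bsub>extension\<^esub> p = (inv\<^bsub>D\<^esub> f (\<one>\<^bsub>G\<^esub>, \<one>\<^bsub>G\<^esub>) \<otimes>\<^bsub>D\<^esub> (inv\<^bsub>D\<^esub> d \<otimes>\<^bsub>D\<^esub> d)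
      \<otimes>\<^bsub>D\<^esub> (inv\<^bsub>D\<^esub> f (inv\<^bsub>G\<^esub> x, x) \<otimes>\<^bsub>D\<^esub> f (inv\<^bsub>G\<^esub> x, x)), inv\<^bsub>G\<^esub> x \<otimes>\<^bsub>G\<^esub> x)"
    using c unfolding p by (simp only: extension_mult D.m_ac D.m_closed D.inv_closed closed G.inv_closed G.one_closed)
  also have "\<dots> = \<one>\<^bsub>extension\<^esub>" using c by simp
  finally show "\<exists>q \<in> carrier extension. q \<otimes>\<^bsub>extension\<^esub> p = \<one>\<^bsub>extension\<^esub>" using c by (intro bexI[of _ ?q]) simp_all
qed

text \<open>\<open>D\<close> is divisible, hence injective, so its embedding into the abelian extension splits; the
  factor \<open>f(\<one>,\<one>)\<close> appears because \<open>(f(\<one>,\<one>)\<inverse>, \<one>)\<close> is the identity of the extension.\<close>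

lemma extension_retraction:
  assumes G: "comm_group G" and dv: "divisible_group D"
    and sym: "\<And>x y. x \<in> carrier G \<Longrightarrow> y \<in> carrier G \<Longrightarrow> f (x, y) = f (y, x)"
  obtains r where "r \<in> hom extension D"
    "\<And>d. d \<in> carrier D \<Longrightarrow> r (d, \<one>\<^bsub>G\<^esub>) = d \<otimes>\<^bsub>D\<^esub> f (\<one>\<^bsub>G\<^esub>, \<one>\<^bsub>G\<^esub>)"
proof -
  interpret E: comm_group extension by (rule extension_comm_group[OF G sym])
  let ?c = "f (\<one>\<^bsub>G\<^esub>, \<one>\<^bsub>G\<^esub>)"
  define A where "A = carrier D \<times> {\<one>\<^bsub>G\<^esub>}"
  have A: "subgroup A extension"
  proof (rule E.subgroupI)
    show "A \<subseteq> carrier extension" "A \<noteq> {}" unfolding A_def by auto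
  next
    fix p assume "p \<in> A"
    then obtain d where p: "p = (d, \<one>\<^bsub>G\<^esub>)" and d: "d \<in> carrier D" unfolding A_def by auto
    let ?q = "(inv\<^bsub>D\<^esub> ?c \<otimes>\<^bsub>D\<^esub> inv\<^bsub>D\<^esub> d \<otimes>\<^bsub>D\<^esub> inv\<^bsub>D\<^esub> ?c, \<one>\<^bsub>G\<^esub>)"
    have "?q \<otimes>\<^bsub>extension\<^esub> p = (inv\<^bsub>D\<^esub> ?c \<otimes>\<^bsub>D\<^esub> (inv\<^bsub>D\<^esub> d \<otimes>\<^bsub>D\<^esub> d) \<otimes>\<^bsub>D\<^esub> (inv\<^bsub>D\<^esub> ?c \<otimes>\<^bsub>D\<^esub> ?c), \<one>\<^bsub>G\<^esub>)"
      using d unfolding p by (simp only: extension_mult D.m_ac D.m_closed D.inv_closed closed G.one_closed G.l_one)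
    also have "\<dots> = \<one>\<^bsub>extension\<^esub>" using d by simp
    finally have "inv\<^bsub>extension\<^esub> p = ?q" using d unfolding p by (intro E.inv_equality) simp_all
    then show "inv\<^bsub>extension\<^esub> p \<in> A" unfolding A_def using d by simp
  next
    fix p q assume "p \<in> A" "q \<in> A"
    then show "p \<otimes>\<^bsub>extension\<^esub> q \<in> A" unfolding A_def by auto
  qed
  define \<phi> where "\<phi> p = fst p \<otimes>\<^bsub>D\<^esub> ?c" for p :: "'d \<times> 'a"
  have "\<phi> \<in> hom (extension\<lparr>carrier := A\<rparr>) D"
    unfolding A_def \<phi>_def by (rule homI) (auto simp: D.m_ac)
  then obtain r where r: "r \<in> hom extension D" and r\<phi>: "\<And>p. p \<in> A \<Longrightarrow> r p = \<phi> p"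
    using divisible_group_hom_extend[OF E.comm_group_axioms D.comm_group_axioms dv A] by blast
  have "r (d, \<one>\<^bsub>G\<^esub>) = d \<otimes>\<^bsub>D\<^esub> ?c" if "d \<in> carrier D" for d
    using r\<phi>[of "(d, \<one>\<^bsub>G\<^esub>)"] that unfolding A_def \<phi>_def by simp
  with r show thesis by (rule that)
qed

lemma symmetric_split:
  assumes G: "comm_group G" and dv: "divisible_group D"
    and sym: "\<And>x y. x \<in> carrier G \<Longrightarrow> y \<in> carrier G \<Longrightarrow> f (x, y) = f (y, x)"
  obtains \<rho> where "\<rho> \<in> carrier G \<rightarrow> carrier D"
    "\<And>x y. x \<in> carrier G \<Longrightarrow> y \<in> carrier G \<Longrightarrow> f (x, y) \<otimes>\<^bsub>D\<^esub> \<rho> (x \<otimes>\<^bsub>G\<^esub> y) = \<rho> x \<otimes>\<^bsub>D\<^esub> \<rho> y"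
proof -
  let ?c = "f (\<one>\<^bsub>G\<^esub>, \<one>\<^bsub>G\<^esub>)"
  obtain r where r: "r \<in> hom extension D"
    and r_fiber: "\<And>d. d \<in> carrier D \<Longrightarrow> r (d, \<one>\<^bsub>G\<^esub>) = d \<otimes>\<^bsub>D\<^esub> ?c"
    using extension_retraction[OF G dv sym] by blast
  define \<rho> where "\<rho> x = r (\<one>\<^bsub>D\<^esub>, x)" for x
  have "\<rho> \<in> carrier G \<rightarrow> carrier D" unfolding \<rho>_def using r by (auto simp: hom_def)
  moreover have "f (x, y) \<otimes>\<^bsub>D\<^esub> \<rho> (x \<otimes>\<^bsub>G\<^esub> y) = \<rho> x \<otimes>\<^bsub>D\<^esub> \<rho> y" if xy: "x \<in> carrier G" "y \<in> carrier G" for x y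
  proof -
    have e: "(\<one>\<^bsub>D\<^esub>, x) \<otimes>\<^bsub>extension\<^esub> (\<one>\<^bsub>D\<^esub>, y) = (f (x, y) \<otimes>\<^bsub>D\<^esub> inv\<^bsub>D\<^esub> ?c, \<one>\<^bsub>G\<^esub>) \<otimes>\<^bsub>extension\<^esub> (\<one>\<^bsub>D\<^esub>, x \<otimes>\<^bsub>G\<^esub> y)"
      using xy by (simp add: left_one[OF G.m_closed[OF xy]] D.m_assoc)
    have "\<rho> x \<otimes>\<^bsub>D\<^esub> \<rho> y = r ((\<one>\<^bsub>D\<^esub>, x) \<otimes>\<^bsub>extension\<^esub> (\<one>\<^bsub>D\<^esub>, y))"
      unfolding \<rho>_def by (rule hom_mult[OF r, symmetric]) (use xy in simp_all)
    also have "\<dots> = r (f (x, y) \<otimes>\<^bsub>D\<^esub> inv\<^bsub>D\<^esub> ?c, \<one>\<^bsub>G\<^esub>) \<otimes>\<^bsub>D\<^esub> \<rho> (x \<otimes>\<^bsub>G\<^esub> y)"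
      unfolding e \<rho>_def by (rule hom_mult[OF r]) (use xy in simp_all)
    also have "\<dots> = f (x, y) \<otimes>\<^bsub>D\<^esub> \<rho> (x \<otimes>\<^bsub>G\<^esub> y)"
      using r_fiber[of "f (x, y) \<otimes>\<^bsub>D\<^esub> inv\<^bsub>D\<^esub> ?c"] xy by (simp add: D.m_assoc)
    finally show ?thesis by simp
  qed
  ultimately show thesis by (rule that)
qed

end

section \<open>Cocycles on central products\<close>

lemma (in group) central_product_commute:
  assumes H: "H \<subseteq> carrier G" and K: "K \<subseteq> carrier G" and HK: "H <#> K = carrier G"
    and comm: "\<And>h k. h \<in> H \<Longrightarrow> k \<in> K \<Longrightarrow> h \<otimes> k = k \<otimes> h"
    and b: "b \<in> H" "b \<in> K" and x: "x \<in> carrier G"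
  shows "b \<otimes> x = x \<otimes> b"
proof -
  obtain h k where hk: "h \<in> H" "k \<in> K" and x_eq: "x = h \<otimes> k"
    using x unfolding HK[symmetric] set_mult_def by blast
  have c: "b \<in> carrier G" "h \<in> carrier G" "k \<in> carrier G" using b(1) hk H K by auto
  have "b \<otimes> (h \<otimes> k) = (h \<otimes> b) \<otimes> k" using comm[OF hk(1) b(2)] c by (simp add: m_assoc)
  also have "\<dots> = h \<otimes> (b \<otimes> k)" using c by (simp add: m_assoc)
  also have "\<dots> = (h \<otimes> k) \<otimes> b" using comm[OF b(1) hk(2)] c by (simp add: m_assoc)
  finally show ?thesis unfolding x_eq .
qed

lemma (in group) central_subgroup_normal:
  assumes B: "subgroup B G" and central: "\<And>b x. b \<in> B \<Longrightarrow> x \<in> carrier G \<Longrightarrow> b \<otimes> x = x \<otimes> b"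
  shows "B \<lhd> G"
  unfolding normal_inv_iff
proof (intro conjI B ballI)
  fix x b assume x: "x \<in> carrier G" and b: "b \<in> B"
  have "x \<otimes> b \<otimes> inv x = b \<otimes> x \<otimes> inv x" using central[OF b x] by simp
  also have "\<dots> = b" using x subgroup.subset[OF B] b by (simp add: m_assoc subsetD)
  finally show "x \<otimes> b \<otimes> inv x \<in> B" using b by simp
qed

context two_cocycle
begin

lemma symmetric_of_central_product:
  assumes H: "subgroup H G" and K: "subgroup K G" and HK: "H <#>\<^bsub>G\<^esub> K = carrier G"
    and comm: "\<And>h k. h \<in> H \<Longrightarrow> k \<in> K \<Longrightarrow> h \<otimes>\<^bsub>G\<^esub> k = k \<otimes>\<^bsub>G\<^esub> h"
    and b: "b \<in> derived G H" "b \<in> derived G K" and x: "x \<in> carrier G"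
  shows "f (x, b) = f (b, x)"
proof -
  have bHK: "b \<in> H" "b \<in> K"
    using b G.derived_incl[OF subset_refl H] G.derived_incl[OF subset_refl K] by blast+
  obtain h k where hk: "h \<in> H" "k \<in> K" and x_eq: "x = h \<otimes>\<^bsub>G\<^esub> k"
    using x unfolding HK[symmetric] set_mult_def by blast
  have c: "b \<in> carrier G" "h \<in> carrier G" "k \<in> carrier G"
    using bHK(1) hk subgroup.subset[OF H] subgroup.subset[OF K] by auto
  have "f (b, h) = f (h, b)"
    by (rule symmetric_on_derived[OF K c(2) _ b(2)]) (simp add: comm[OF hk(1)])
  then have "skew b h = \<one>\<^bsub>D\<^esub>" using skew_eq_one_iff c by simp
  moreover have "f (b, k) = f (k, b)"
    by (rule symmetric_on_derived[OF H c(3) _ b(1)]) (simp add: comm[OF _ hk(2)])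
  then have "skew b k = \<one>\<^bsub>D\<^esub>" using skew_eq_one_iff c by simp
  moreover have "skew b (h \<otimes>\<^bsub>G\<^esub> k) = skew b h \<otimes>\<^bsub>D\<^esub> skew b k"
    by (rule skew_mult[OF c(2,3,1)]) (simp_all add: comm[OF hk(1) bHK(2)] comm[OF bHK(1) hk(2)])
  ultimately have "skew b x = \<one>\<^bsub>D\<^esub>" unfolding x_eq by simp
  then show ?thesis using skew_eq_one_iff[OF x c(1)] by simp
qed

lemma left_invariant:
  assumes b: "b \<in> carrier G" and const: "\<And>x. x \<in> carrier G \<Longrightarrow> f (b, x) = f (\<one>\<^bsub>G\<^esub>, \<one>\<^bsub>G\<^esub>)"
    and x: "x \<in> carrier G" and y: "y \<in> carrier G"
  shows "f (b \<otimes>\<^bsub>G\<^esub> x, y) = f (x, y)"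
proof -
  have "f (\<one>\<^bsub>G\<^esub>, \<one>\<^bsub>G\<^esub>) \<otimes>\<^bsub>D\<^esub> f (b \<otimes>\<^bsub>G\<^esub> x, y) = f (x, y) \<otimes>\<^bsub>D\<^esub> f (\<one>\<^bsub>G\<^esub>, \<one>\<^bsub>G\<^esub>)"
    using cocycle_eq[OF b x y] const[OF x] const[OF G.m_closed[OF x y]] by simp
  then show ?thesis using b x y by (simp add: D.m_comm[of "f (\<one>\<^bsub>G\<^esub>, \<one>\<^bsub>G\<^esub>)"])
qed

lemma right_invariant:
  assumes b: "b \<in> carrier G" and central: "\<And>x. x \<in> carrier G \<Longrightarrow> b \<otimes>\<^bsub>G\<^esub> x = x \<otimes>\<^bsub>G\<^esub> b"
    and const: "\<And>x. x \<in> carrier G \<Longrightarrow> f (b, x) = f (\<one>\<^bsub>G\<^esub>, \<one>\<^bsub>G\<^esub>)"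
    and const': "\<And>x. x \<in> carrier G \<Longrightarrow> f (x, b) = f (\<one>\<^bsub>G\<^esub>, \<one>\<^bsub>G\<^esub>)"
    and x: "x \<in> carrier G" and y: "y \<in> carrier G"
  shows "f (x, b \<otimes>\<^bsub>G\<^esub> y) = f (x, y)"
proof -
  have "f (\<one>\<^bsub>G\<^esub>, \<one>\<^bsub>G\<^esub>) \<otimes>\<^bsub>D\<^esub> f (x \<otimes>\<^bsub>G\<^esub> b, y) = f (\<one>\<^bsub>G\<^esub>, \<one>\<^bsub>G\<^esub>) \<otimes>\<^bsub>D\<^esub> f (x, b \<otimes>\<^bsub>G\<^esub> y)"
    using cocycle_eq[OF x b y] const[OF y] const'[OF x] by simp
  then have "f (x, b \<otimes>\<^bsub>G\<^esub> y) = f (b \<otimes>\<^bsub>G\<^esub> x, y)" using b x y central[OF x] by simp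
  also have "\<dots> = f (x, y)" by (rule left_invariant[OF b const x y])
  finally show ?thesis .
qed

end

locale central_two_cocycle = two_cocycle +
  fixes B :: "'a set"
  assumes B_subgroup: "subgroup B G"
    and B_central: "b \<in> B \<Longrightarrow> x \<in> carrier G \<Longrightarrow> b \<otimes>\<^bsub>G\<^esub> x = x \<otimes>\<^bsub>G\<^esub> b"
    and B_symmetric: "b \<in> B \<Longrightarrow> x \<in> carrier G \<Longrightarrow> f (x, b) = f (b, x)"
begin

lemma B_carrier [simp]: "b \<in> B \<Longrightarrow> b \<in> carrier G"
  using subgroup.subset[OF B_subgroup] by blast

lemma B_normal: "B \<lhd> G"
  by (rule G.central_subgroup_normal[OF B_subgroup B_central])

text \<open>\<open>coset_rep\<close> is a transversal of \<open>B\<close> through \<open>\<one>\<close>, and \<open>x = coset_offset x \<otimes> coset_rep x\<close>.\<close>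

definition coset_rep :: "'a \<Rightarrow> 'a" where
  "coset_rep x = (if B #>\<^bsub>G\<^esub> x = B then \<one>\<^bsub>G\<^esub> else (SOME t. t \<in> B #>\<^bsub>G\<^esub> x))"

definition coset_offset :: "'a \<Rightarrow> 'a" where
  "coset_offset x = x \<otimes>\<^bsub>G\<^esub> inv\<^bsub>G\<^esub> coset_rep x"

lemma coset_rep_in_coset:
  assumes x: "x \<in> carrier G"
  shows "coset_rep x \<in> B #>\<^bsub>G\<^esub> x"
proof (cases "B #>\<^bsub>G\<^esub> x = B")
  case True
  then show ?thesis unfolding coset_rep_def using subgroup.one_closed[OF B_subgroup] by simp
next
  case False
  have "x \<in> B #>\<^bsub>G\<^esub> x" by (rule G.rcos_self[OF x B_subgroup])
  then have "(SOME t. t \<in> B #>\<^bsub>G\<^esub> x) \<in> B #>\<^bsub>G\<^esub> x" by (rule someI[where P="\<lambda>t. t \<in> B #>\<^bsub>G\<^esub> x"])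
  then show ?thesis unfolding coset_rep_def using False by simp
qed

lemma coset_rep_closed [simp]:
  assumes x: "x \<in> carrier G"
  shows "coset_rep x \<in> carrier G"
proof -
  obtain b where "b \<in> B" "coset_rep x = b \<otimes>\<^bsub>G\<^esub> x"
    using coset_rep_in_coset[OF x] unfolding r_coset_def by blast
  then show ?thesis using x by simp
qed

lemma coset_rep_of_mem [simp]: "b \<in> B \<Longrightarrow> coset_rep b = \<one>\<^bsub>G\<^esub>"
  unfolding coset_rep_def using subgroup.rcos_const[OF B_subgroup G.is_group] by simp

lemma coset_rep_mult: "b \<in> B \<Longrightarrow> x \<in> carrier G \<Longrightarrow> coset_rep (b \<otimes>\<^bsub>G\<^esub> x) = coset_rep x"
  unfolding coset_rep_def
  using G.coset_mult_assoc[OF subgroup.subset[OF B_subgroup], of b x, symmetric] subgroup.rcos_const[OF B_subgroup G.is_group]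
  by simp

lemma coset_offset_mem [simp]: "x \<in> carrier G \<Longrightarrow> coset_offset x \<in> B"
proof -
  assume x: "x \<in> carrier G"
  then obtain b where b: "b \<in> B" "coset_rep x = b \<otimes>\<^bsub>G\<^esub> x"
    using coset_rep_in_coset unfolding r_coset_def by blast
  have "coset_offset x = inv\<^bsub>G\<^esub> b"
    unfolding coset_offset_def b(2) using x b(1) by (simp add: G.inv_mult_group G.m_assoc[symmetric])
  then show ?thesis using subgroup.m_inv_closed[OF B_subgroup b(1)] by simp
qed

lemma coset_offset_rep: "x \<in> carrier G \<Longrightarrow> coset_offset x \<otimes>\<^bsub>G\<^esub> coset_rep x = x"
  unfolding coset_offset_def by (simp add: G.m_assoc)

lemma coset_offset_of_mem [simp]: "b \<in> B \<Longrightarrow> coset_offset b = b"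
  unfolding coset_offset_def by simp

lemma coset_offset_mult: "b \<in> B \<Longrightarrow> x \<in> carrier G \<Longrightarrow> coset_offset (b \<otimes>\<^bsub>G\<^esub> x) = b \<otimes>\<^bsub>G\<^esub> coset_offset x"
  unfolding coset_offset_def by (simp add: coset_rep_mult G.m_assoc)

context
  fixes \<rho>
  assumes \<rho>_closed: "b \<in> B \<Longrightarrow> \<rho> b \<in> carrier D"
    and \<rho>_split: "b \<in> B \<Longrightarrow> b' \<in> B \<Longrightarrow> f (b, b') \<otimes>\<^bsub>D\<^esub> \<rho> (b \<otimes>\<^bsub>G\<^esub> b') = \<rho> b \<otimes>\<^bsub>D\<^esub> \<rho> b'"
begin

definition normalizing_cochain where
  "normalizing_cochain x = f (coset_offset x, coset_rep x) \<otimes>\<^bsub>D\<^esub> inv\<^bsub>D\<^esub> \<rho> (coset_offset x)"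

lemma normalizing_cochain_closed: "normalizing_cochain \<in> carrier G \<rightarrow> carrier D"
  unfolding normalizing_cochain_def using \<rho>_closed by simp

lemma normalizing_cochain_mult_\<rho>:
  "x \<in> carrier G \<Longrightarrow> normalizing_cochain x \<otimes>\<^bsub>D\<^esub> \<rho> (coset_offset x) = f (coset_offset x, coset_rep x)"
  unfolding normalizing_cochain_def using \<rho>_closed by (simp add: D.m_assoc)

text \<open>With \<open>x = \<beta> t\<close> as above, this is the cocycle identity at \<open>(b, \<beta>, t)\<close> combined with the
  splitting \<open>\<rho>\<close> at \<open>(b, \<beta>)\<close>.\<close>

lemma normalizing_cochain_eq:
  assumes b: "b \<in> B" and x: "x \<in> carrier G"
  shows "f (\<one>\<^bsub>G\<^esub>, \<one>\<^bsub>G\<^esub>) \<otimes>\<^bsub>D\<^esub> normalizing_cochain (b \<otimes>\<^bsub>G\<^esub> x)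
    = f (b, x) \<otimes>\<^bsub>D\<^esub> normalizing_cochain b \<otimes>\<^bsub>D\<^esub> normalizing_cochain x"
proof -
  let ?g = normalizing_cochain and ?c = "f (\<one>\<^bsub>G\<^esub>, \<one>\<^bsub>G\<^esub>)"
  define \<beta> where "\<beta> = coset_offset x"
  define t where "t = coset_rep x"
  have \<beta>: "\<beta> \<in> B" "\<beta> \<in> carrier G" and t: "t \<in> carrier G" unfolding \<beta>_def t_def using x by simp_all
  have b\<beta>: "b \<otimes>\<^bsub>G\<^esub> \<beta> \<in> B" by (rule subgroup.m_closed[OF B_subgroup b \<beta>(1)])
  have x_eq: "\<beta> \<otimes>\<^bsub>G\<^esub> t = x" unfolding \<beta>_def t_def by (rule coset_offset_rep[OF x])
  have g_bx: "?g (b \<otimes>\<^bsub>G\<^esub> x) \<otimes>\<^bsub>D\<^esub> \<rho> (b \<otimes>\<^bsub>G\<^esub> \<beta>) = f (b \<otimes>\<^bsub>G\<^esub> \<beta>, t)"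
    using normalizing_cochain_mult_\<rho>[OF G.m_closed[OF B_carrier[OF b] x]]
    unfolding \<beta>_def t_def coset_offset_mult[OF b x] coset_rep_mult[OF b x] .
  have g_b: "?g b \<otimes>\<^bsub>D\<^esub> \<rho> b = ?c"
    using normalizing_cochain_mult_\<rho>[OF B_carrier[OF b]] b by (simp add: right_one[OF B_carrier[OF b]])
  have g_x: "?g x \<otimes>\<^bsub>D\<^esub> \<rho> \<beta> = f (\<beta>, t)"
    unfolding \<beta>_def t_def by (rule normalizing_cochain_mult_\<rho>[OF x])
  have c: "?g x \<in> carrier D" "?g b \<in> carrier D" "?g (b \<otimes>\<^bsub>G\<^esub> x) \<in> carrier D"
    "\<rho> b \<in> carrier D" "\<rho> \<beta> \<in> carrier D" "\<rho> (b \<otimes>\<^bsub>G\<^esub> \<beta>) \<in> carrier D"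
    using normalizing_cochain_closed x b \<beta> b\<beta> \<rho>_closed by auto
  let ?K = "\<rho> (b \<otimes>\<^bsub>G\<^esub> \<beta>) \<otimes>\<^bsub>D\<^esub> \<rho> b \<otimes>\<^bsub>D\<^esub> \<rho> \<beta>"
  have "(?c \<otimes>\<^bsub>D\<^esub> ?g (b \<otimes>\<^bsub>G\<^esub> x)) \<otimes>\<^bsub>D\<^esub> ?K
      = ?c \<otimes>\<^bsub>D\<^esub> (?g (b \<otimes>\<^bsub>G\<^esub> x) \<otimes>\<^bsub>D\<^esub> \<rho> (b \<otimes>\<^bsub>G\<^esub> \<beta>)) \<otimes>\<^bsub>D\<^esub> (\<rho> b \<otimes>\<^bsub>D\<^esub> \<rho> \<beta>)"
    using c by (simp add: D.m_ac)
  also have "\<dots> = ?c \<otimes>\<^bsub>D\<^esub> f (b \<otimes>\<^bsub>G\<^esub> \<beta>, t) \<otimes>\<^bsub>D\<^esub> (f (b, \<beta>) \<otimes>\<^bsub>D\<^esub> \<rho> (b \<otimes>\<^bsub>G\<^esub> \<beta>))"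
    by (simp only: g_bx \<rho>_split[OF b \<beta>(1)])
  also have "\<dots> = (f (b, \<beta>) \<otimes>\<^bsub>D\<^esub> f (b \<otimes>\<^bsub>G\<^esub> \<beta>, t)) \<otimes>\<^bsub>D\<^esub> ?c \<otimes>\<^bsub>D\<^esub> \<rho> (b \<otimes>\<^bsub>G\<^esub> \<beta>)"
    using c b \<beta> t by (simp add: D.m_ac)
  also have "\<dots> = (f (\<beta>, t) \<otimes>\<^bsub>D\<^esub> f (b, x)) \<otimes>\<^bsub>D\<^esub> ?c \<otimes>\<^bsub>D\<^esub> \<rho> (b \<otimes>\<^bsub>G\<^esub> \<beta>)"
    using cocycle_eq[OF B_carrier[OF b] \<beta>(2) t] by (simp only: x_eq)
  also have "\<dots> = f (b, x) \<otimes>\<^bsub>D\<^esub> (?g b \<otimes>\<^bsub>D\<^esub> \<rho> b) \<otimes>\<^bsub>D\<^esub> (?g x \<otimes>\<^bsub>D\<^esub> \<rho> \<beta>) \<otimes>\<^bsub>D\<^esub> \<rho> (b \<otimes>\<^bsub>G\<^esub> \<beta>)"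
    unfolding g_b g_x using c b x \<beta> t by (simp add: D.m_ac)
  also have "\<dots> = (f (b, x) \<otimes>\<^bsub>D\<^esub> ?g b \<otimes>\<^bsub>D\<^esub> ?g x) \<otimes>\<^bsub>D\<^esub> ?K"
    using c b x by (simp add: D.m_ac)
  finally show ?thesis using c b x by simp
qed

lemma mult_coboundary_normalizing_left:
  assumes b: "b \<in> B" and x: "x \<in> carrier G"
  shows "mult_coboundary G D f normalizing_cochain (b, x) = f (\<one>\<^bsub>G\<^esub>, \<one>\<^bsub>G\<^esub>)"
proof -
  note cochain = G.is_monoid D.comm_group_axioms two_cocycle normalizing_cochain_closed
  have "mult_coboundary G D f normalizing_cochain (b, x) \<otimes>\<^bsub>D\<^esub> normalizing_cochain (b \<otimes>\<^bsub>G\<^esub> x)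
      = f (\<one>\<^bsub>G\<^esub>, \<one>\<^bsub>G\<^esub>) \<otimes>\<^bsub>D\<^esub> normalizing_cochain (b \<otimes>\<^bsub>G\<^esub> x)"
    by (simp only: mult_coboundary_mult[OF cochain B_carrier[OF b] x] normalizing_cochain_eq[OF b x])
  moreover have "normalizing_cochain (b \<otimes>\<^bsub>G\<^esub> x) \<in> carrier D"
    using normalizing_cochain_closed b x by auto
  ultimately show ?thesis using mult_coboundary_closed[OF cochain B_carrier[OF b] x] by simp
qed

lemma mult_coboundary_normalizing_sym:
  assumes b: "b \<in> B" and x: "x \<in> carrier G"
  shows "mult_coboundary G D f normalizing_cochain (x, b) = mult_coboundary G D f normalizing_cochain (b, x)"
proof -
  have "normalizing_cochain x \<in> carrier D" "normalizing_cochain b \<in> carrier D"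
    using normalizing_cochain_closed x b by auto
  then show ?thesis
    unfolding mult_coboundary_apply[OF x B_carrier[OF b]] mult_coboundary_apply[OF B_carrier[OF b] x]
      B_symmetric[OF b x] B_central[OF b x]
    by (simp add: D.m_comm[of "normalizing_cochain x" "normalizing_cochain b"])
qed

lemma cohomologous_to_inflated_of_split:
  obtains h where "h \<in> two_cocycles (G Mod B) D" "(inflate_cocycle G B h, f) \<in> cohomologous G D"
proof -
  let ?F = "mult_coboundary G D f normalizing_cochain"
  have F: "?F \<in> two_cocycles G D"
    by (rule mult_coboundary_two_cocycle[OF G.is_monoid D.comm_group_axioms two_cocycle normalizing_cochain_closed])
  interpret F: two_cocycle G D ?F by unfold_locales (rule F)
  have one: "?F (\<one>\<^bsub>G\<^esub>, \<one>\<^bsub>G\<^esub>) = f (\<one>\<^bsub>G\<^esub>, \<one>\<^bsub>G\<^esub>)"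
    using mult_coboundary_normalizing_left[OF subgroup.one_closed[OF B_subgroup]] by simp
  have const: "?F (b, x) = ?F (\<one>\<^bsub>G\<^esub>, \<one>\<^bsub>G\<^esub>)" "?F (x, b) = ?F (\<one>\<^bsub>G\<^esub>, \<one>\<^bsub>G\<^esub>)"
    if "b \<in> B" "x \<in> carrier G" for b x
    using mult_coboundary_normalizing_left[OF that] mult_coboundary_normalizing_sym[OF that] one by simp_all
  obtain h where h: "h \<in> two_cocycles (G Mod B) D" and "inflate_cocycle G B h = ?F"
  proof (rule normal.two_cocycle_factors_through_quotient[OF B_normal F])
    show "?F (b \<otimes>\<^bsub>G\<^esub> x, y) = ?F (x, y)" if "b \<in> B" "x \<in> carrier G" "y \<in> carrier G" for b x y
      using that by (intro F.left_invariant const) simp_all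
    show "?F (x, b \<otimes>\<^bsub>G\<^esub> y) = ?F (x, y)" if "b \<in> B" "x \<in> carrier G" "y \<in> carrier G" for b x y
      using that by (intro F.right_invariant const B_central) simp_all
  qed
  moreover have "(?F, f) \<in> cohomologous G D"
    by (rule cohomologous_mult_coboundary[OF G.is_monoid D.comm_group_axioms two_cocycle normalizing_cochain_closed])
  ultimately show thesis using that by simp
qed

end

lemma cohomologous_to_inflated:
  assumes dv: "divisible_group D"
  obtains h where "h \<in> two_cocycles (G Mod B) D" "(inflate_cocycle G B h, f) \<in> cohomologous G D"
proof -
  let ?B = "G\<lparr>carrier := B\<rparr>"
  have comm: "comm_group ?B"
    by (rule group.group_comm_groupI[OF subgroup.subgroup_is_group[OF B_subgroup G.is_group]])
       (simp add: B_central)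
  have "restrict f (B \<times> B) \<in> two_cocycles ?B D"
    by (rule two_cocyclesI) (auto simp: cocycle_eq subgroup.m_closed[OF B_subgroup])
  then interpret R: two_cocycle ?B D "restrict f (B \<times> B)"
    by (intro two_cocycle.intro subgroup.subgroup_is_group[OF B_subgroup G.is_group] D.comm_group_axioms two_cocycle_axioms.intro)
  have sym: "restrict f (B \<times> B) (x, y) = restrict f (B \<times> B) (y, x)"
    if "x \<in> carrier ?B" "y \<in> carrier ?B" for x y
    using that B_symmetric by simp
  obtain \<rho> where \<rho>: "\<rho> \<in> carrier ?B \<rightarrow> carrier D"
    and split: "\<And>x y. x \<in> carrier ?B \<Longrightarrow> y \<in> carrier ?B \<Longrightarrow>
      restrict f (B \<times> B) (x, y) \<otimes>\<^bsub>D\<^esub> \<rho> (x \<otimes>\<^bsub>?B\<^esub> y) = \<rho> x \<otimes>\<^bsub>D\<^esub> \<rho> y"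
    using R.symmetric_split[OF comm dv sym] by blast
  show thesis
  proof (rule cohomologous_to_inflated_of_split)
    show "\<rho> b \<in> carrier D" if "b \<in> B" for b using \<rho> that by auto
    show "f (b, b') \<otimes>\<^bsub>D\<^esub> \<rho> (b \<otimes>\<^bsub>G\<^esub> b') = \<rho> b \<otimes>\<^bsub>D\<^esub> \<rho> b'" if "b \<in> B" "b' \<in> B" for b b'
      using split[of b b'] that by (simp add: subgroup.m_closed[OF B_subgroup])
  qed (rule that)
qed

end

lemma (in group) derived_central_product_central:
  assumes H: "subgroup H G" and K: "subgroup K G" and HK: "H <#> K = carrier G"
    and comm: "\<And>h k. h \<in> H \<Longrightarrow> k \<in> K \<Longrightarrow> h \<otimes> k = k \<otimes> h"
    and b: "b \<in> derived G H" "b \<in> derived G K" and x: "x \<in> carrier G"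
  shows "b \<otimes> x = x \<otimes> b"
  using central_product_commute[OF subgroup.subset[OF H] subgroup.subset[OF K] HK comm _ _ x]
    b derived_incl[OF subset_refl H] derived_incl[OF subset_refl K] by blast

lemma central_product_cocycle_inflated:
  assumes G: "group G" and D: "comm_group D" "divisible_group D" and f: "f \<in> two_cocycles G D"
    and H: "subgroup H G" and K: "subgroup K G" and HK: "H <#>\<^bsub>G\<^esub> K = carrier G"
    and comm: "\<And>h k. h \<in> H \<Longrightarrow> k \<in> K \<Longrightarrow> h \<otimes>\<^bsub>G\<^esub> k = k \<otimes>\<^bsub>G\<^esub> h"
    and B: "subgroup B G" and B_derived: "B \<subseteq> derived G H \<inter> derived G K"
  obtains h where "h \<in> two_cocycles (G Mod B) D" "(inflate_cocycle G B h, f) \<in> cohomologous G D"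
proof -
  have cocycle: "two_cocycle G D f" by (intro two_cocycle.intro G D(1) two_cocycle_axioms.intro f)
  interpret two_cocycle G D f by (rule cocycle)
  have derived: "b \<in> derived G H" "b \<in> derived G K" if "b \<in> B" for b using that B_derived by blast+
  interpret central_two_cocycle G D f B
  proof (rule central_two_cocycle.intro[OF cocycle], rule central_two_cocycle_axioms.intro[OF B])
    show "b \<otimes>\<^bsub>G\<^esub> x = x \<otimes>\<^bsub>G\<^esub> b" if "b \<in> B" "x \<in> carrier G" for b x
      by (rule G.derived_central_product_central[OF H K HK comm derived[OF that(1)] that(2)])
    show "f (x, b) = f (b, x)" if "b \<in> B" "x \<in> carrier G" for b x
      by (rule symmetric_of_central_product[OF H K HK comm derived[OF that(1)] that(2)])
  qed
  show thesis using cohomologous_to_inflated[OF D(2)] that by blast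
qed

theorem theorem3p1:
  fixes G :: "('a, 'b) monoid_scheme" and D :: "('d, 'e) monoid_scheme"
    and H K B :: "'a set"
  assumes "group G"
    and "H \<lhd> G" and "K \<lhd> G"
    and "H <#>\<^bsub>G\<^esub> K = carrier G"
    and "\<forall>h\<in>H. \<forall>k\<in>K. h \<otimes>\<^bsub>G\<^esub> k = k \<otimes>\<^bsub>G\<^esub> h"
    and "comm_group D" and "divisible_group D"
    and "subgroup B G" and "B \<subseteq> derived G H \<inter> derived G K"
  shows "inflation G B D ` H2 (G Mod B) D = H2 G D"
proof -
  interpret G: group G by fact
  have H: "subgroup H G" and K: "subgroup K G" using assms(2,3) normal_imp_subgroup by blast+
  have comm: "\<And>h k. h \<in> H \<Longrightarrow> k \<in> K \<Longrightarrow> h \<otimes>\<^bsub>G\<^esub> k = k \<otimes>\<^bsub>G\<^esub> h" using assms(5) by blast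
  have "B \<lhd> G"
    by (rule G.central_subgroup_normal[OF assms(8)])
       (use G.derived_central_product_central[OF H K assms(4) comm] assms(9) in blast)
  then show ?thesis
  proof (rule normal.inflation_surjective[OF _ assms(6)])
    fix f assume "f \<in> two_cocycles G D"
    then show "\<exists>h \<in> two_cocycles (G Mod B) D. (inflate_cocycle G B h, f) \<in> cohomologous G D"
      using central_product_cocycle_inflated[OF assms(1,6,7) _ H K assms(4) comm assms(8,9)] by blast
  qed
qed

end
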